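(* Let $l>0$, $m>0$, $W=lV\oplus mV^*$ and $U=U(GL)$. Consider the generating set $\mathcal M$ of ${\bf k}[W]^U$ consisting of the entries of $\overline{V^*}\,\overline V$, the lower minors of $\overline V$ of orders $1,\dots,\min\{l,n\}$, and the left minors of $\overline{V^*}$ of orders $1,\dots,\min\{m,n\}$. Then the ideal of all polynomial relations among the elements of $\mathcal M$ is generated by the relations among the lower minors of $\overline V$ alone (the Plücker and incidence relations) together with the relations among the left minors of $\overline{V^*}$ alone (the analogous Plücker and incidence relations) if and only if $l+m\le n$.
   Context: ${\bf k}$ algebraically closed of characteristic $0$; $V$ $n$-dimensional with basis $e_1,\dots,e_n$ and dual basis of $V^*$; $U(GL)$ the upper unitriangular matrices acting on $V$ and dually on $V^*$. $\overline V$ is the $n\times l$ matrix of coordinate functions on $lV$ ($(i,j)$ entry: $i$-th coordinate of the $j$-th vector); $\overline{V^*}$ is the $m\times n$ matrix of coordinate functions on $mV^*$ ($(i,j)$ entry: $j$-th coordinate of the $i$-th covector). A lower minor of order $k$ uses the last $k$ rows and any $k$ columns; a left minor of order $k$ uses the first $k$ columns and any $k$ rows. The ideal of relations is the kernel of the homomorphism from the polynomial ring with one variable per element of $\mathcal M$ to ${\bf k}[W]$; the relations among lower minors of $\overline V$ alone are those polynomials in the lower-minor variables lying in this kernel, similarly for $\overline{V^*}$. *)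

theory Defs
  imports "HOL-Library.Poly_Mapping" "HOL-Computational_Algebra.Polynomial" "HOL-Combinatorics.Permutations"
begin

type_synonym ('v, 'k) mpoly = "('v \<Rightarrow>\<^sub>0 nat) \<Rightarrow>\<^sub>0 'k"

definition mvar :: "'v \<Rightarrow> ('v, 'k::comm_ring_1) mpoly" where
  "mvar v = Poly_Mapping.single (Poly_Mapping.single v 1) 1"

definition mconst :: "'k::comm_ring_1 \<Rightarrow> ('v, 'k) mpoly" where
  "mconst c = Poly_Mapping.single 0 c"

definition mvars :: "('v, 'k::zero) mpoly \<Rightarrow> 'v set" where
  "mvars p = (\<Union>t \<in> Poly_Mapping.keys p. Poly_Mapping.keys (t :: 'v \<Rightarrow>\<^sub>0 nat))"

definition msubst :: "('v \<Rightarrow> ('w, 'k::comm_ring_1) mpoly) \<Rightarrow> ('v, 'k) mpoly \<Rightarrow> ('w, 'k) mpoly" where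
  "msubst \<sigma> p = (\<Sum>t \<in> Poly_Mapping.keys p. mconst (Poly_Mapping.lookup p t) * (\<Prod>v \<in> Poly_Mapping.keys t. \<sigma> v ^ Poly_Mapping.lookup t v))"

definition ideal_gen_in :: "'a::comm_ring_1 set \<Rightarrow> 'a set \<Rightarrow> 'a set" where
  "ideal_gen_in R G = {p. \<exists>S c. finite S \<and> S \<subseteq> G \<and> (\<forall>g\<in>S. c g \<in> R) \<and> p = (\<Sum>g\<in>S. c g * g)}"

definition alg_closed_field :: "'k::field itself \<Rightarrow> bool" where
  "alg_closed_field _ = (\<forall>p :: 'k poly. 0 < degree p \<longrightarrow> (\<exists>x. poly p x = 0))"

definition ldet :: "nat \<Rightarrow> (nat \<Rightarrow> nat \<Rightarrow> 'a::comm_ring_1) \<Rightarrow> 'a" where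
  "ldet k A = (\<Sum>\<pi> \<in> {\<pi>. \<pi> permutes {0..<k}}. of_int (sign \<pi>) * (\<Prod>i<k. A i (\<pi> i)))"

text \<open>Coordinates on W = lV + mV*: Xc i j is the i-th coordinate of the j-th vector
  (entry (i,j) of the n x l matrix Vbar); Yc i j is the j-th coordinate of the i-th
  covector (entry (i,j) of the m x n matrix V*bar). Indices are 0-based.\<close>
datatype wvar = Xc nat nat | Yc nat nat

text \<open>Labels of the generators in M: Ent i j = entry (i,j) of V*bar Vbar;
  Low S = lower minor of Vbar with column set S; Lft S = left minor of V*bar with row set S.\<close>
datatype mlab = Ent nat nat | Low "nat set" | Lft "nat set"

definition Vbar :: "nat \<Rightarrow> nat \<Rightarrow> (wvar, 'k::comm_ring_1) mpoly" where
  "Vbar i j = mvar (Xc i j)"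

definition Vsbar :: "nat \<Rightarrow> nat \<Rightarrow> (wvar, 'k::comm_ring_1) mpoly" where
  "Vsbar i j = mvar (Yc i j)"

definition lower_minor :: "nat \<Rightarrow> nat set \<Rightarrow> (wvar, 'k::comm_ring_1) mpoly" where
  "lower_minor n S = ldet (card S)
     (\<lambda>a b. Vbar (n - card S + a) (sorted_list_of_set S ! b))"

definition left_minor :: "nat set \<Rightarrow> (wvar, 'k::comm_ring_1) mpoly" where
  "left_minor S = ldet (card S) (\<lambda>a b. Vsbar (sorted_list_of_set S ! a) b)"

definition gen_poly :: "nat \<Rightarrow> mlab \<Rightarrow> (wvar, 'k::comm_ring_1) mpoly" where
  "gen_poly n L = (case L of
      Ent i j \<Rightarrow> (\<Sum>k<n. Vsbar i k * Vbar k j)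
    | Low S \<Rightarrow> lower_minor n S
    | Lft S \<Rightarrow> left_minor S)"

definition ent_labels :: "nat \<Rightarrow> nat \<Rightarrow> mlab set" where
  "ent_labels l m = {Ent i j | i j. i < m \<and> j < l}"

definition low_labels :: "nat \<Rightarrow> nat \<Rightarrow> mlab set" where
  "low_labels n l = {Low S | S. S \<subseteq> {0..<l} \<and> 1 \<le> card S \<and> card S \<le> min l n}"

definition lft_labels :: "nat \<Rightarrow> nat \<Rightarrow> mlab set" where
  "lft_labels n m = {Lft S | S. S \<subseteq> {0..<m} \<and> 1 \<le> card S \<and> card S \<le> min m n}"

definition M_labels :: "nat \<Rightarrow> nat \<Rightarrow> nat \<Rightarrow> mlab set" where
  "M_labels n l m = ent_labels l m \<union> low_labels n l \<union> lft_labels n m"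

definition relations :: "'k::comm_ring_1 itself \<Rightarrow> nat \<Rightarrow> mlab set \<Rightarrow> (mlab, 'k) mpoly set" where
  "relations _ n L = {p. mvars p \<subseteq> L \<and> msubst (gen_poly n) p = 0}"

definition polys_in :: "'k::comm_ring_1 itself \<Rightarrow> mlab set \<Rightarrow> (mlab, 'k) mpoly set" where
  "polys_in _ L = {p. mvars p \<subseteq> L}"

end

theory Submission
  imports Defs "Jordan_Normal_Form.Determinant" "HOL-Library.Nat_Bijection"
begin

text \<open>
  If \<open>l + m \<le> n\<close>, let \<open>X\<close> be the lower \<open>l \<times> l\<close> block of \<open>Vbar\<close> and \<open>d = det X\<close>. The substitution
  that keeps the last \<open>l\<close> rows of \<open>Vbar\<close> and the first \<open>m\<close> columns of \<open>V*bar\<close>, and sends the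
  last \<open>l\<close> coordinates of the covector \<open>y\<^sub>i\<close> to \<open>t\<^sub>i adj X\<close> for fresh indeterminates \<open>t\<close>,
  fixes every minor (as \<open>m \<le> n - l\<close>) and sends the entry \<open>\<langle>y\<^sub>i, x\<^sub>j\<rangle>\<close> to \<open>d t\<^sub>i\<^sub>j\<close>. Write a
  relation as \<open>\<Sum> e\<^sup>\<beta> P\<^sub>\<beta>\<close>, where \<open>e\<^sup>\<beta>\<close> are monomials in the entry labels and the \<open>P\<^sub>\<beta>\<close> are
  polynomials in the minor labels. Its image \<open>\<Sum> d ^ |\<beta>| P\<^sub>\<beta>(minors) t\<^sup>\<beta>\<close> vanishes, so every
  \<open>P\<^sub>\<beta>\<close> is a relation among the minors. The minors of \<open>Vbar\<close> and those of \<open>V*bar\<close> involve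
  disjoint sets of variables, so by linear algebra over the field of coefficients such a
  relation lies in the ideal generated by the relations among minors of one kind.

  If \<open>n < l + m\<close> and \<open>n > 0\<close>, put \<open>a = min l n\<close> and \<open>b = n + 1 - a \<le> m\<close>. Expanding the left
  \<open>b \<times> b\<close> minor of \<open>V*bar\<close> along its last column and the lower \<open>a \<times> a\<close> minor of \<open>Vbar\<close> along
  its first row writes their product linearly in the entries \<open>\<langle>y\<^sub>i, x\<^sub>j\<rangle>\<close>. Adding \<open>1\<close> to the
  value of \<open>\<langle>y\<^sub>0, x\<^sub>0\<rangle>\<close> kills the ideal generated by the relations among minors, but turns
  this relation into a nonzero product of two minors. For \<open>n = 0\<close> the label of
  \<open>\<langle>y\<^sub>0, x\<^sub>0\<rangle>\<close> is itself such a relation.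
\<close>

section \<open>Substitution homomorphisms\<close>

lemma poly_mapping_sum_single:
  "(p :: 'a \<Rightarrow>\<^sub>0 'b::comm_monoid_add) =
     (\<Sum>t\<in>Poly_Mapping.keys p. Poly_Mapping.single t (Poly_Mapping.lookup p t))"
proof (rule poly_mapping_eqI)
  fix x
  show "Poly_Mapping.lookup p x =
      Poly_Mapping.lookup (\<Sum>t\<in>Poly_Mapping.keys p. Poly_Mapping.single t (Poly_Mapping.lookup p t)) x"
    unfolding lookup_sum lookup_single
    by (cases "x \<in> Poly_Mapping.keys p") (auto simp: when_def in_keys_iff)
qed

definition msubst_monom :: "('v \<Rightarrow> ('w, 'k::comm_ring_1) mpoly) \<Rightarrow> ('v \<Rightarrow>\<^sub>0 nat) \<Rightarrow> ('w, 'k) mpoly" where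
  "msubst_monom \<sigma> t = (\<Prod>v\<in>Poly_Mapping.keys t. \<sigma> v ^ Poly_Mapping.lookup t v)"

lemma msubst_monom_superset:
  assumes "finite K" "Poly_Mapping.keys t \<subseteq> K"
  shows "msubst_monom \<sigma> t = (\<Prod>v\<in>K. \<sigma> v ^ Poly_Mapping.lookup t v)"
  unfolding msubst_monom_def
  by (rule prod.mono_neutral_left) (use assms in \<open>auto simp: in_keys_iff\<close>)

lemma msubst_monom_add: "msubst_monom \<sigma> (s + t) = msubst_monom \<sigma> s * msubst_monom \<sigma> t"
proof -
  let ?K = "Poly_Mapping.keys s \<union> Poly_Mapping.keys t"
  have "msubst_monom \<sigma> (s + t) = (\<Prod>v\<in>?K. \<sigma> v ^ Poly_Mapping.lookup (s + t) v)"
    by (rule msubst_monom_superset) (auto dest: set_mp[OF keys_add])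
  also have "\<dots> = (\<Prod>v\<in>?K. \<sigma> v ^ Poly_Mapping.lookup s v) * (\<Prod>v\<in>?K. \<sigma> v ^ Poly_Mapping.lookup t v)"
    unfolding lookup_add power_add prod.distrib ..
  also have "\<dots> = msubst_monom \<sigma> s * msubst_monom \<sigma> t"
    using msubst_monom_superset[of ?K s \<sigma>] msubst_monom_superset[of ?K t \<sigma>] by simp
  finally show ?thesis .
qed

lemma mconst_1 [simp]: "mconst 1 = 1"
  by (simp add: mconst_def)

lemma mconst_add: "mconst (a + b) = mconst a + mconst b"
  by (simp add: mconst_def single_add)

lemma mconst_mult: "mconst (a * b) = mconst a * mconst b"
  by (simp add: mconst_def mult_single)

lemma mconst_of_int [simp]: "mconst (of_int z) = of_int z"
  by (simp add: mconst_def)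

lemma msubst_superset:
  assumes "finite K" "Poly_Mapping.keys p \<subseteq> K"
  shows "msubst \<sigma> p = (\<Sum>t\<in>K. mconst (Poly_Mapping.lookup p t) * msubst_monom \<sigma> t)"
  unfolding msubst_def msubst_monom_def[symmetric]
  by (rule sum.mono_neutral_left) (use assms in \<open>auto simp: in_keys_iff mconst_def\<close>)

lemma msubst_add: "msubst \<sigma> (p + q) = msubst \<sigma> p + msubst \<sigma> q"
proof -
  let ?K = "Poly_Mapping.keys p \<union> Poly_Mapping.keys q"
  have "msubst \<sigma> (p + q) = (\<Sum>t\<in>?K. mconst (Poly_Mapping.lookup (p + q) t) * msubst_monom \<sigma> t)"
    by (rule msubst_superset) (auto dest: set_mp[OF keys_add])
  also have "\<dots> = (\<Sum>t\<in>?K. mconst (Poly_Mapping.lookup p t) * msubst_monom \<sigma> t)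
      + (\<Sum>t\<in>?K. mconst (Poly_Mapping.lookup q t) * msubst_monom \<sigma> t)"
    unfolding lookup_add mconst_add distrib_right sum.distrib ..
  also have "\<dots> = msubst \<sigma> p + msubst \<sigma> q"
    using msubst_superset[of ?K p \<sigma>] msubst_superset[of ?K q \<sigma>] by simp
  finally show ?thesis .
qed

lemma msubst_0 [simp]: "msubst \<sigma> 0 = 0"
  by (simp add: msubst_def)

lemma msubst_sum: "msubst \<sigma> (sum f A) = (\<Sum>x\<in>A. msubst \<sigma> (f x))"
  by (induction A rule: infinite_finite_induct) (auto simp: msubst_add)

lemma msubst_single: "msubst \<sigma> (Poly_Mapping.single t c) = mconst c * msubst_monom \<sigma> t"
  using msubst_superset[of "{t}" "Poly_Mapping.single t c" \<sigma>] by simp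

lemma mult_poly_mapping_expand:
  "p * q = (\<Sum>u\<in>Poly_Mapping.keys p. \<Sum>v\<in>Poly_Mapping.keys q.
     Poly_Mapping.single (u + v) (Poly_Mapping.lookup p u * Poly_Mapping.lookup q v))"
proof -
  have "p * q = (\<Sum>u\<in>Poly_Mapping.keys p. Poly_Mapping.single u (Poly_Mapping.lookup p u))
       * (\<Sum>v\<in>Poly_Mapping.keys q. Poly_Mapping.single v (Poly_Mapping.lookup q v))"
    by (simp only: poly_mapping_sum_single[symmetric])
  then show ?thesis
    by (simp only: sum_product mult_single)
qed

lemma msubst_mult: "msubst \<sigma> (p * q) = msubst \<sigma> p * msubst \<sigma> q"
proof -
  have "msubst \<sigma> (p * q) = (\<Sum>u\<in>Poly_Mapping.keys p. \<Sum>v\<in>Poly_Mapping.keys q.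
      mconst (Poly_Mapping.lookup p u * Poly_Mapping.lookup q v) * msubst_monom \<sigma> (u + v))"
    by (subst mult_poly_mapping_expand) (simp only: msubst_sum msubst_single)
  also have "\<dots> = (\<Sum>u\<in>Poly_Mapping.keys p. \<Sum>v\<in>Poly_Mapping.keys q.
      mconst (Poly_Mapping.lookup p u) * msubst_monom \<sigma> u * (mconst (Poly_Mapping.lookup q v) * msubst_monom \<sigma> v))"
    unfolding mconst_mult msubst_monom_add by (intro sum.cong refl) (simp add: mult_ac)
  also have "\<dots> = msubst \<sigma> p * msubst \<sigma> q"
    by (simp only: msubst_def msubst_monom_def[symmetric] sum_product)
  finally show ?thesis .
qed

lemma msubst_mconst [simp]: "msubst \<sigma> (mconst c) = mconst c"
  unfolding mconst_def msubst_single by (simp add: msubst_monom_def)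

lemma msubst_1 [simp]: "msubst \<sigma> 1 = 1"
  using msubst_mconst[of \<sigma> 1] by simp

lemma msubst_mvar [simp]: "msubst \<sigma> (mvar v) = \<sigma> v"
  unfolding mvar_def msubst_single by (simp add: msubst_monom_def mconst_def)

lemma msubst_uminus: "msubst \<sigma> (- p) = - msubst \<sigma> p"
  using msubst_add[of \<sigma> "- p" p] by (simp add: eq_neg_iff_add_eq_0)

lemma msubst_diff: "msubst \<sigma> (p - q) = msubst \<sigma> p - msubst \<sigma> q"
  using msubst_add[of \<sigma> p "- q"] by (simp add: msubst_uminus)

lemma msubst_power: "msubst \<sigma> (p ^ k) = msubst \<sigma> p ^ k"
  by (induction k) (auto simp: msubst_mult)

lemma msubst_prod: "msubst \<sigma> (prod f A) = (\<Prod>x\<in>A. msubst \<sigma> (f x))"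
  by (induction A rule: infinite_finite_induct) (auto simp: msubst_mult)

lemma msubst_of_int [simp]: "msubst \<sigma> (of_int z) = of_int z"
  using msubst_mconst[of \<sigma> "of_int z"] by simp

lemma msubst_msubst: "msubst \<tau> (msubst \<sigma> p) = msubst (\<lambda>v. msubst \<tau> (\<sigma> v)) p"
  unfolding msubst_def[of \<sigma>] msubst_sum msubst_mult msubst_mconst msubst_prod msubst_power
  unfolding msubst_def[of "\<lambda>v. msubst \<tau> (\<sigma> v)"] ..

lemma keys_subset_mvars: "t \<in> Poly_Mapping.keys p \<Longrightarrow> Poly_Mapping.keys t \<subseteq> mvars p"
  by (auto simp: mvars_def)

lemma msubst_cong:
  assumes "\<And>v. v \<in> mvars p \<Longrightarrow> \<sigma> v = \<sigma>' v"
  shows "msubst \<sigma> p = msubst \<sigma>' p"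
  unfolding msubst_def
proof (intro sum.cong refl arg_cong2[where f=times] prod.cong)
  fix t v assume "t \<in> Poly_Mapping.keys p" "v \<in> Poly_Mapping.keys t"
  then have "v \<in> mvars p" using keys_subset_mvars by blast
  then show "\<sigma> v ^ Poly_Mapping.lookup t v = \<sigma>' v ^ Poly_Mapping.lookup t v"
    using assms by simp
qed

lemma mvar_power:
  "(mvar v :: ('v, 'k::comm_ring_1) mpoly) ^ k = Poly_Mapping.single (Poly_Mapping.single v k) 1"
  by (induction k) (auto simp: mvar_def mult_single single_add[symmetric] add.commute)

lemma prod_single_one:
  "(\<Prod>x\<in>A. Poly_Mapping.single (f x) (1::'b::comm_semiring_1)) = Poly_Mapping.single (\<Sum>x\<in>A. f x) 1"
  by (induction A rule: infinite_finite_induct) (auto simp: mult_single)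

lemma msubst_mvar_id: "msubst mvar p = p"
proof -
  have monom: "msubst_monom mvar t = Poly_Mapping.single t 1" for t
    unfolding msubst_monom_def mvar_power prod_single_one
    using poly_mapping_sum_single[of t] by simp
  show ?thesis
    unfolding msubst_def msubst_monom_def[symmetric] monom mconst_def
    by (subst (2) poly_mapping_sum_single[of p]) (simp add: mult_single)
qed

lemma msubst_eq_self:
  assumes "\<And>v. v \<in> mvars p \<Longrightarrow> \<sigma> v = mvar v"
  shows "msubst \<sigma> p = p"
  using msubst_cong[of p \<sigma> mvar] assms msubst_mvar_id by metis

lemma mvars_0 [simp]: "mvars 0 = {}"
  by (simp add: mvars_def)

lemma mvars_add: "mvars (p + q) \<subseteq> mvars p \<union> mvars q"
  unfolding mvars_def using keys_add by fastforce

lemma keys_add_nat: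
  "Poly_Mapping.keys ((a::'v \<Rightarrow>\<^sub>0 nat) + b) = Poly_Mapping.keys a \<union> Poly_Mapping.keys b"
  by (auto simp: in_keys_iff lookup_add)

lemma mvars_mult: "mvars (p * q) \<subseteq> mvars p \<union> mvars q"
proof -
  have "Poly_Mapping.keys t \<subseteq> mvars p \<union> mvars q" if "t \<in> Poly_Mapping.keys (p * q)" for t
  proof -
    have "t \<in> {a + b |a b. a \<in> Poly_Mapping.keys p \<and> b \<in> Poly_Mapping.keys q}"
      using keys_mult[of p q] that by (rule subsetD)
    then obtain a b where "a \<in> Poly_Mapping.keys p" "b \<in> Poly_Mapping.keys q" "t = a + b"
      by blast
    then show ?thesis using keys_add_nat[of a b] by (auto simp: mvars_def)
  qed
  then show ?thesis by (auto simp: mvars_def)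
qed

lemma mvars_uminus [simp]: "mvars (- p) = mvars p"
  by (simp add: mvars_def)

lemma mvars_diff: "mvars (p - q) \<subseteq> mvars p \<union> mvars (q :: ('v, 'k::comm_ring_1) mpoly)"
  using mvars_add[of p "- q"] by simp

lemma mvars_single: "mvars (Poly_Mapping.single t c) \<subseteq> Poly_Mapping.keys t"
  by (auto simp: mvars_def)

lemma mvars_mconst [simp]: "mvars (mconst c) = {}"
  using mvars_single[of 0 c] by (auto simp: mconst_def)

lemma mvars_1 [simp]: "mvars (1 :: ('v, 'k::comm_ring_1) mpoly) = {}"
  using mvars_mconst[of "1::'k"] by (simp add: mconst_def)

lemma mvars_of_int [simp]: "mvars (of_int z :: ('v, 'k::comm_ring_1) mpoly) = {}"
  using mvars_mconst[of "of_int z :: 'k"] by simp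

lemma mvars_mvar: "mvars (mvar v) \<subseteq> {v}"
  using mvars_single[of "Poly_Mapping.single v 1" 1] by (auto simp: mvar_def)

lemma mvars_power: "mvars (p ^ k) \<subseteq> mvars (p :: ('v, 'k::comm_ring_1) mpoly)"
  by (induction k) (use mvars_mult[of p] in auto)

lemma mvars_mult_subset: "mvars p \<subseteq> A \<Longrightarrow> mvars q \<subseteq> A \<Longrightarrow> mvars (p * q) \<subseteq> A"
  using mvars_mult[of p q] by blast

lemma mvars_add_subset: "mvars p \<subseteq> A \<Longrightarrow> mvars q \<subseteq> A \<Longrightarrow> mvars (p + q) \<subseteq> A"
  using mvars_add[of p q] by blast

lemma mvars_diff_subset:
  "mvars (p :: ('v, 'k::comm_ring_1) mpoly) \<subseteq> A \<Longrightarrow> mvars q \<subseteq> A \<Longrightarrow> mvars (p - q) \<subseteq> A"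
  using mvars_diff[of p q] by blast

lemma mvars_sum_subset: "(\<And>x. x \<in> X \<Longrightarrow> mvars (f x) \<subseteq> A) \<Longrightarrow> mvars (sum f X) \<subseteq> A"
  by (induction X rule: infinite_finite_induct) (simp_all add: mvars_add_subset)

lemma mvars_prod_subset:
  "(\<And>x. x \<in> X \<Longrightarrow> mvars (f x :: ('v, 'k::comm_ring_1) mpoly) \<subseteq> A) \<Longrightarrow> mvars (prod f X) \<subseteq> A"
  by (induction X rule: infinite_finite_induct) (simp_all add: mvars_mult_subset)

lemma mvars_msubst: "mvars (msubst \<sigma> p) \<subseteq> (\<Union>v\<in>mvars p. mvars (\<sigma> v))"
  unfolding msubst_def
proof (intro mvars_sum_subset mvars_mult_subset mvars_prod_subset)
  fix t v assume "t \<in> Poly_Mapping.keys p" "v \<in> Poly_Mapping.keys t"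
  then have "v \<in> mvars p" using keys_subset_mvars by blast
  then show "mvars (\<sigma> v ^ Poly_Mapping.lookup t v) \<subseteq> (\<Union>v\<in>mvars p. mvars (\<sigma> v))"
    using mvars_power[of "\<sigma> v"] by blast
qed simp

lemma mvars_ldet: "mvars (ldet k A) \<subseteq> (\<Union>i<k. \<Union>j<k. mvars (A i j))"
  unfolding ldet_def
proof (intro mvars_sum_subset mvars_mult_subset mvars_prod_subset)
  fix \<pi> i assume "\<pi> \<in> {\<pi>. \<pi> permutes {0..<k}}" "i \<in> {..<k}"
  then have "\<pi> i < k" using permutes_in_image by fastforce
  with \<open>i \<in> {..<k}\<close> show "mvars (A i (\<pi> i)) \<subseteq> (\<Union>i<k. \<Union>j<k. mvars (A i j))"
    by (intro order.trans[OF _ SUP_upper[of i]] SUP_upper) auto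
qed simp

section \<open>Ideals generated inside a subring\<close>

lemma ideal_gen_in_0: "0 \<in> ideal_gen_in R G"
  unfolding ideal_gen_in_def by (intro CollectI exI[of _ "{}"]) auto

lemma ideal_gen_in_gen: "g \<in> G \<Longrightarrow> c \<in> R \<Longrightarrow> c * g \<in> ideal_gen_in R G"
  unfolding ideal_gen_in_def by (intro CollectI exI[of _ "{g}"] exI[of _ "\<lambda>_. c"]) auto

lemma ideal_gen_in_add:
  assumes R0: "0 \<in> R" and Radd: "\<And>a b. a \<in> R \<Longrightarrow> b \<in> R \<Longrightarrow> a + b \<in> R"
    and x: "x \<in> ideal_gen_in R G" and y: "y \<in> ideal_gen_in R G"
  shows "x + y \<in> ideal_gen_in R G"
proof -
  obtain S1 c1 where 1: "finite S1" "S1 \<subseteq> G" "\<forall>g\<in>S1. c1 g \<in> R" "x = (\<Sum>g\<in>S1. c1 g * g)"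
    using x unfolding ideal_gen_in_def by blast
  obtain S2 c2 where 2: "finite S2" "S2 \<subseteq> G" "\<forall>g\<in>S2. c2 g \<in> R" "y = (\<Sum>g\<in>S2. c2 g * g)"
    using y unfolding ideal_gen_in_def by blast
  define c1' where "c1' g = (if g \<in> S1 then c1 g else 0)" for g
  define c2' where "c2' g = (if g \<in> S2 then c2 g else 0)" for g
  have "x = (\<Sum>g\<in>S1 \<union> S2. c1' g * g)"
    unfolding 1(4) c1'_def by (rule sum.mono_neutral_cong_left) (use 1 2 in auto)
  moreover have "y = (\<Sum>g\<in>S1 \<union> S2. c2' g * g)"
    unfolding 2(4) c2'_def by (rule sum.mono_neutral_cong_left) (use 1 2 in auto)
  ultimately have "x + y = (\<Sum>g\<in>S1 \<union> S2. (c1' g + c2' g) * g)"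
    by (simp add: distrib_right sum.distrib)
  moreover have "c1' g + c2' g \<in> R" for g
    using 1(3) 2(3) R0 by (intro Radd) (auto simp: c1'_def c2'_def)
  ultimately show ?thesis
    unfolding ideal_gen_in_def using 1 2
    by (intro CollectI exI[of _ "S1 \<union> S2"] exI[of _ "\<lambda>g. c1' g + c2' g"]) auto
qed

lemma ideal_gen_in_sum:
  assumes "0 \<in> R" "\<And>a b. a \<in> R \<Longrightarrow> b \<in> R \<Longrightarrow> a + b \<in> R"
    and "\<And>i. i \<in> I \<Longrightarrow> f i \<in> ideal_gen_in R G"
  shows "sum f I \<in> ideal_gen_in R G"
  using assms(3)
  by (induction I rule: infinite_finite_induct) (auto intro: ideal_gen_in_0 ideal_gen_in_add assms(1,2))

lemma ideal_gen_in_mult: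
  assumes Rmult: "\<And>a b. a \<in> R \<Longrightarrow> b \<in> R \<Longrightarrow> a * b \<in> R"
    and r: "r \<in> R" and x: "x \<in> ideal_gen_in R G"
  shows "r * x \<in> ideal_gen_in R G"
proof -
  obtain S c where S: "finite S" "S \<subseteq> G" "\<forall>g\<in>S. c g \<in> R" "x = (\<Sum>g\<in>S. c g * g)"
    using x unfolding ideal_gen_in_def by blast
  have "r * x = (\<Sum>g\<in>S. (r * c g) * g)"
    unfolding S(4) sum_distrib_left by (simp add: mult.assoc)
  then show ?thesis
    unfolding ideal_gen_in_def using S r Rmult
    by (intro CollectI exI[of _ S] exI[of _ "\<lambda>g. r * c g"]) auto
qed

lemma ideal_gen_in_mvars_add:
  "x \<in> ideal_gen_in {p. mvars p \<subseteq> M} G \<Longrightarrow> y \<in> ideal_gen_in {p. mvars p \<subseteq> M} G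
    \<Longrightarrow> x + y \<in> ideal_gen_in {p. mvars p \<subseteq> M} G"
  by (rule ideal_gen_in_add) (simp_all add: mvars_add_subset)

lemma ideal_gen_in_mvars_sum:
  "(\<And>i. i \<in> I \<Longrightarrow> f i \<in> ideal_gen_in {p. mvars p \<subseteq> M} G)
    \<Longrightarrow> sum f I \<in> ideal_gen_in {p. mvars p \<subseteq> M} G"
  by (rule ideal_gen_in_sum) (simp_all add: mvars_add_subset)

lemma ideal_gen_in_mvars_mult:
  "mvars r \<subseteq> M \<Longrightarrow> x \<in> ideal_gen_in {p. mvars p \<subseteq> M} G
    \<Longrightarrow> r * x \<in> ideal_gen_in {p. mvars p \<subseteq> M} G"
  by (rule ideal_gen_in_mult) (simp_all add: mvars_mult_subset)

lemma msubst_ideal_gen_in_eq_0: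
  assumes "\<And>g. g \<in> G \<Longrightarrow> msubst \<sigma> g = 0" and "x \<in> ideal_gen_in R G"
  shows "msubst \<sigma> x = 0"
proof -
  obtain S c where "S \<subseteq> G" "x = (\<Sum>g\<in>S. c g * g)"
    using assms(2) unfolding ideal_gen_in_def by blast
  then show ?thesis using assms(1) by (auto simp: msubst_sum msubst_mult intro!: sum.neutral)
qed

lemma mvars_ideal_gen_in:
  assumes "\<And>g. g \<in> G \<Longrightarrow> mvars g \<subseteq> M" and "x \<in> ideal_gen_in {p. mvars p \<subseteq> M} G"
  shows "mvars x \<subseteq> M"
proof -
  obtain S c where S: "S \<subseteq> G" "\<forall>g\<in>S. mvars (c g) \<subseteq> M" and x: "x = (\<Sum>g\<in>S. c g * g)"
    using assms(2) unfolding ideal_gen_in_def by blast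
  have "mvars (c g * g) \<subseteq> M" if "g \<in> S" for g
    using S assms(1) that by (intro mvars_mult_subset) blast+
  then show ?thesis unfolding x by (rule mvars_sum_subset)
qed

section \<open>Relations among polynomials in disjoint sets of variables\<close>

lemma lookup_mconst_mult: "Poly_Mapping.lookup (mconst c * p) s = c * Poly_Mapping.lookup p s"
proof -
  have "mconst c * p = (\<Sum>v\<in>Poly_Mapping.keys p. Poly_Mapping.single v (c * Poly_Mapping.lookup p v))"
    unfolding mconst_def by (subst (1) poly_mapping_sum_single[of p]) (simp add: sum_distrib_left mult_single)
  then show ?thesis
    by (simp add: lookup_sum lookup_single when_def sum_distrib_left in_keys_iff)
qed

lemma add_eq_add_disjoint_keys:
  fixes u v s \<mu> :: "'v \<Rightarrow>\<^sub>0 nat"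
  assumes "A \<inter> B = {}" "Poly_Mapping.keys u \<subseteq> A" "Poly_Mapping.keys v \<subseteq> B"
    "Poly_Mapping.keys s \<inter> B = {}" "Poly_Mapping.keys \<mu> \<subseteq> B"
  shows "u + v = s + \<mu> \<longleftrightarrow> u = s \<and> v = \<mu>"
proof
  assume e: "u + v = s + \<mu>"
  have "Poly_Mapping.lookup u x = Poly_Mapping.lookup s x \<and> Poly_Mapping.lookup v x = Poly_Mapping.lookup \<mu> x" for x
  proof -
    have sum_eq: "Poly_Mapping.lookup u x + Poly_Mapping.lookup v x = Poly_Mapping.lookup s x + Poly_Mapping.lookup \<mu> x"
      using arg_cong[OF e, of "\<lambda>t. Poly_Mapping.lookup t x"] by (simp add: lookup_add)
    show ?thesis
    proof (cases "x \<in> B")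
      case True
      then have "x \<notin> Poly_Mapping.keys u" "x \<notin> Poly_Mapping.keys s" using assms by auto
      then show ?thesis using sum_eq by (simp add: in_keys_iff)
    next
      case False
      then have "x \<notin> Poly_Mapping.keys v" "x \<notin> Poly_Mapping.keys \<mu>" using assms by auto
      then show ?thesis using sum_eq by (simp add: in_keys_iff)
    qed
  qed
  then show "u = s \<and> v = \<mu>" by (auto intro: poly_mapping_eqI)
qed simp

lemma sum_sum_if_eq:
  fixes f :: "'a \<Rightarrow> 'b \<Rightarrow> 'c::comm_monoid_add"
  assumes "finite K1" "finite K2"
  shows "(\<Sum>u\<in>K1. \<Sum>v\<in>K2. if u = s \<and> v = \<mu> then f u v else 0) = (if s \<in> K1 \<and> \<mu> \<in> K2 then f s \<mu> else 0)"
proof -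
  have "(\<Sum>v\<in>K2. if u = s \<and> v = \<mu> then f u v else 0) = (if u = s then (if \<mu> \<in> K2 then f s \<mu> else 0) else 0)" for u
    by (cases "u = s") (simp_all add: sum.delta' assms)
  then show ?thesis by (simp add: sum.delta' assms)
qed

lemma lookup_mult_disjoint_vars:
  fixes a b :: "('v, 'k::comm_ring_1) mpoly"
  assumes "A \<inter> B = {}" "mvars a \<subseteq> A" "mvars b \<subseteq> B"
    "Poly_Mapping.keys s \<inter> B = {}" "Poly_Mapping.keys \<mu> \<subseteq> B"
  shows "Poly_Mapping.lookup (a * b) (s + \<mu>) = Poly_Mapping.lookup a s * Poly_Mapping.lookup b \<mu>"
proof -
  have eq: "u + v = s + \<mu> \<longleftrightarrow> u = s \<and> v = \<mu>" if "u \<in> Poly_Mapping.keys a" "v \<in> Poly_Mapping.keys b" for u v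
    by (rule add_eq_add_disjoint_keys[OF assms(1) _ _ assms(4,5)])
       (use that assms(2,3) keys_subset_mvars in blast)+
  have "Poly_Mapping.lookup (a * b) (s + \<mu>) = (\<Sum>u\<in>Poly_Mapping.keys a. \<Sum>v\<in>Poly_Mapping.keys b.
      (if u = s \<and> v = \<mu> then Poly_Mapping.lookup a u * Poly_Mapping.lookup b v else 0))"
    unfolding mult_poly_mapping_expand[of a b] lookup_sum lookup_single
    by (intro sum.cong refl) (auto simp: when_def eq)
  also have "\<dots> = Poly_Mapping.lookup a s * Poly_Mapping.lookup b \<mu>"
    unfolding sum_sum_if_eq[OF finite_keys finite_keys] by (simp add: in_keys_iff)
  finally show ?thesis .
qed

lemma sum_mult_disjoint_vars_coeff_eq_0:
  fixes a b :: "'i \<Rightarrow> ('v, 'k::comm_ring_1) mpoly"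
  assumes fin: "finite I" and AB: "A \<inter> B = {}"
    and aA: "\<And>i. i \<in> I \<Longrightarrow> mvars (a i) \<subseteq> A" and bB: "\<And>i. i \<in> I \<Longrightarrow> mvars (b i) \<subseteq> B"
    and zero: "(\<Sum>i\<in>I. a i * b i) = 0" and \<mu>: "Poly_Mapping.keys \<mu> \<subseteq> B"
  shows "(\<Sum>i\<in>I. mconst (Poly_Mapping.lookup (b i) \<mu>) * a i) = 0"
proof (rule poly_mapping_eqI)
  fix s
  show "Poly_Mapping.lookup (\<Sum>i\<in>I. mconst (Poly_Mapping.lookup (b i) \<mu>) * a i) s = Poly_Mapping.lookup 0 s"
  proof (cases "Poly_Mapping.keys s \<inter> B = {}")
    case True
    have "Poly_Mapping.lookup (\<Sum>i\<in>I. mconst (Poly_Mapping.lookup (b i) \<mu>) * a i) s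
        = Poly_Mapping.lookup (\<Sum>i\<in>I. a i * b i) (s + \<mu>)"
      unfolding lookup_sum lookup_mconst_mult
      by (intro sum.cong refl) (simp add: lookup_mult_disjoint_vars[OF AB aA bB True \<mu>] mult.commute)
    then show ?thesis using zero by simp
  next
    case False
    have "s \<notin> Poly_Mapping.keys (a i)" if "i \<in> I" for i
      using False keys_subset_mvars[of s "a i"] aA[OF that] AB by blast
    then show ?thesis unfolding lookup_sum lookup_mconst_mult by (simp add: in_keys_iff)
  qed
qed

lemma mpoly_eq_0I:
  assumes "mvars p \<subseteq> B" "\<And>\<mu>. Poly_Mapping.keys \<mu> \<subseteq> B \<Longrightarrow> Poly_Mapping.lookup p \<mu> = 0"
  shows "p = 0"
proof (rule poly_mapping_eqI)
  fix \<mu>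
  show "Poly_Mapping.lookup p \<mu> = Poly_Mapping.lookup 0 \<mu>"
    using assms keys_subset_mvars[of \<mu> p] by (cases "\<mu> \<in> Poly_Mapping.keys p") (auto simp: in_keys_iff)
qed

lemma sum_mult_monomials_eq_0D:
  fixes a :: "'i \<Rightarrow> ('v, 'k::comm_ring_1) mpoly"
  assumes fin: "finite I" and AB: "A \<inter> B = {}"
    and aA: "\<And>i. i \<in> I \<Longrightarrow> mvars (a i) \<subseteq> A" and sB: "\<And>i. i \<in> I \<Longrightarrow> Poly_Mapping.keys (s i) \<subseteq> B"
    and inj: "inj_on s I" and zero: "(\<Sum>i\<in>I. a i * Poly_Mapping.single (s i) 1) = 0" and i0: "i0 \<in> I"
  shows "a i0 = 0"
proof -
  have single_B: "mvars (Poly_Mapping.single (s i) (1::'k)) \<subseteq> B" if "i \<in> I" for i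
    using mvars_single sB[OF that] by (rule order.trans)
  have "(\<Sum>i\<in>I. mconst (Poly_Mapping.lookup (Poly_Mapping.single (s i) 1) (s i0)) * a i) = 0"
    by (rule sum_mult_disjoint_vars_coeff_eq_0[OF fin AB aA single_B zero sB[OF i0]])
  moreover have "mconst (Poly_Mapping.lookup (Poly_Mapping.single (s i) 1) (s i0)) * a i
      = (if i = i0 then a i else 0)" if "i \<in> I" for i
    using inj_onD[OF inj _ that i0] by (cases "s i = s i0") (auto simp: lookup_single mconst_def)
  ultimately show ?thesis using fin i0 by (simp add: sum.delta')
qed

definition restr :: "'v set \<Rightarrow> ('v \<Rightarrow>\<^sub>0 nat) \<Rightarrow> ('v \<Rightarrow>\<^sub>0 nat)" where
  "restr A t = Abs_poly_mapping (\<lambda>x. if x \<in> A then Poly_Mapping.lookup t x else 0)"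

lemma lookup_restr: "Poly_Mapping.lookup (restr A t) x = (if x \<in> A then Poly_Mapping.lookup t x else 0)"
proof -
  have "finite {x. (if x \<in> A then Poly_Mapping.lookup t x else 0) \<noteq> 0}"
  proof (rule finite_subset[of _ "Poly_Mapping.keys t"])
    show "{x. (if x \<in> A then Poly_Mapping.lookup t x else 0) \<noteq> 0} \<subseteq> Poly_Mapping.keys t"
    proof
      fix x assume "x \<in> {x. (if x \<in> A then Poly_Mapping.lookup t x else 0) \<noteq> 0}"
      then have "Poly_Mapping.lookup t x \<noteq> 0" by (cases "x \<in> A") auto
      then show "x \<in> Poly_Mapping.keys t" by (simp add: in_keys_iff)
    qed
  qed simp
  then show ?thesis unfolding restr_def by simp
qed

lemma keys_restr: "Poly_Mapping.keys (restr A t) = Poly_Mapping.keys t \<inter> A"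
proof -
  have "x \<in> Poly_Mapping.keys (restr A t) \<longleftrightarrow> x \<in> Poly_Mapping.keys t \<inter> A" for x
    by (cases "x \<in> A") (simp_all add: in_keys_iff lookup_restr)
  then show ?thesis by blast
qed

lemma restr_add_restr_Compl: "restr A t + restr (- A) t = t"
  by (rule poly_mapping_eqI) (simp add: lookup_add lookup_restr)

lemma mpoly_decompose_vars:
  fixes p :: "('v, 'k::comm_ring_1) mpoly"
  obtains I P where "finite I" "\<And>\<beta>. \<beta> \<in> I \<Longrightarrow> Poly_Mapping.keys \<beta> \<subseteq> mvars p \<inter> E"
    "\<And>\<beta>. mvars (P \<beta>) \<subseteq> mvars p - E" "p = (\<Sum>\<beta>\<in>I. Poly_Mapping.single \<beta> 1 * P \<beta>)"
proof
  let ?K = "Poly_Mapping.keys p"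
  define P where "P \<beta> = (\<Sum>t\<in>{t \<in> ?K. restr E t = \<beta>}.
    Poly_Mapping.single (restr (- E) t) (Poly_Mapping.lookup p t))" for \<beta>
  show "finite (restr E ` ?K)" by simp
  show "Poly_Mapping.keys \<beta> \<subseteq> mvars p \<inter> E" if "\<beta> \<in> restr E ` ?K" for \<beta>
    using that by (auto simp: keys_restr mvars_def)
  show "mvars (P \<beta>) \<subseteq> mvars p - E" for \<beta>
    unfolding P_def
  proof (rule mvars_sum_subset)
    fix t assume "t \<in> {t \<in> ?K. restr E t = \<beta>}"
    then have "Poly_Mapping.keys (restr (- E) t) \<subseteq> mvars p - E"
      using keys_subset_mvars[of t p] by (auto simp: keys_restr)
    then show "mvars (Poly_Mapping.single (restr (- E) t) (Poly_Mapping.lookup p t)) \<subseteq> mvars p - E"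
      by (rule order.trans[OF mvars_single])
  qed
  have "(\<Sum>\<beta>\<in>restr E ` ?K. Poly_Mapping.single \<beta> 1 * P \<beta>)
      = (\<Sum>\<beta>\<in>restr E ` ?K. \<Sum>t\<in>{t \<in> ?K. restr E t = \<beta>}. Poly_Mapping.single t (Poly_Mapping.lookup p t))"
    unfolding P_def sum_distrib_left
    by (intro sum.cong refl) (auto simp: mult_single restr_add_restr_Compl)
  also have "\<dots> = (\<Sum>t\<in>?K. Poly_Mapping.single t (Poly_Mapping.lookup p t))"
    by (rule sum.image_gen[OF finite_keys, symmetric])
  finally show "p = (\<Sum>\<beta>\<in>restr E ` ?K. Poly_Mapping.single \<beta> 1 * P \<beta>)"
    by (simp flip: poly_mapping_sum_single)
qed

definition msubst_relations :: "('v \<Rightarrow> ('w, 'k::comm_ring_1) mpoly) \<Rightarrow> 'v set \<Rightarrow> ('v, 'k) mpoly set" where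
  "msubst_relations \<sigma> L = {p. mvars p \<subseteq> L \<and> msubst \<sigma> p = 0}"

lemma sum_mult_eliminate:
  fixes f h d :: "'i \<Rightarrow> 'a::comm_ring_1"
  assumes "finite I" "i0 \<in> I" "d i0 = 1"
  shows "(\<Sum>i\<in>I. f i * h i) = h i0 * (\<Sum>i\<in>I. d i * f i) + (\<Sum>i\<in>I - {i0}. f i * (h i - d i * h i0))"
proof -
  have split: "(\<Sum>i\<in>I. F i) = F i0 + (\<Sum>i\<in>I - {i0}. F i)" for F :: "'i \<Rightarrow> 'a"
    using assms by (simp add: sum.remove)
  show ?thesis
    unfolding split[of "\<lambda>i. f i * h i"] split[of "\<lambda>i. d i * f i"] assms(3)
    by (simp add: algebra_simps sum_distrib_left sum_subtractf)
qed

lemma sum_mult_eq_0_independentD: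
  fixes a b :: "'i \<Rightarrow> ('v, 'k::comm_ring_1) mpoly"
  assumes fin: "finite I" and AB: "A \<inter> B = {}"
    and aA: "\<And>i. i \<in> I \<Longrightarrow> mvars (a i) \<subseteq> A" and bB: "\<And>i. i \<in> I \<Longrightarrow> mvars (b i) \<subseteq> B"
    and zero: "(\<Sum>i\<in>I. a i * b i) = 0"
    and indep: "\<And>c. (\<Sum>i\<in>I. mconst (c i) * a i) = 0 \<Longrightarrow> \<forall>i\<in>I. c i = 0"
    and i0: "i0 \<in> I"
  shows "b i0 = 0"
proof (rule mpoly_eq_0I[OF bB[OF i0]])
  fix \<mu> :: "'v \<Rightarrow>\<^sub>0 nat" assume \<mu>: "Poly_Mapping.keys \<mu> \<subseteq> B"
  have "(\<Sum>i\<in>I. mconst (Poly_Mapping.lookup (b i) \<mu>) * a i) = 0"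
    by (rule sum_mult_disjoint_vars_coeff_eq_0[OF fin AB aA bB zero \<mu>])
  then show "Poly_Mapping.lookup (b i0) \<mu> = 0"
    using indep[of "\<lambda>i. Poly_Mapping.lookup (b i) \<mu>"] i0 by blast
qed

lemma msubst_relations_eliminate:
  fixes \<sigma> :: "'v \<Rightarrow> ('w, 'k::field) mpoly"
  assumes fin: "finite I" and i0: "i0 \<in> I" "c i0 \<noteq> 0"
    and dep: "(\<Sum>i\<in>I. mconst (c i) * msubst \<sigma> (f i)) = 0"
    and fA: "\<And>i. i \<in> I \<Longrightarrow> mvars (f i) \<subseteq> LA" and hB: "\<And>i. i \<in> I \<Longrightarrow> mvars (h i) \<subseteq> LB"
    and zero: "(\<Sum>i\<in>I. msubst \<sigma> (f i) * msubst \<sigma> (h i)) = 0"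
  obtains g h' where "g \<in> msubst_relations \<sigma> LA" "\<And>i. i \<in> I - {i0} \<Longrightarrow> mvars (h' i) \<subseteq> LB"
    "(\<Sum>i\<in>I. f i * h i) = h i0 * g + (\<Sum>i\<in>I - {i0}. f i * h' i)"
    "(\<Sum>i\<in>I - {i0}. msubst \<sigma> (f i) * msubst \<sigma> (h' i)) = 0"
proof
  define d where "d i = (mconst (c i / c i0) :: ('v, 'k) mpoly)" for i
  define g where "g = (\<Sum>i\<in>I. d i * f i)"
  define h' where "h' i = h i - d i * h i0" for i
  have d0: "d i0 = 1" using i0 by (simp add: d_def)
  have "msubst \<sigma> g = mconst (inverse (c i0)) * (\<Sum>i\<in>I. mconst (c i) * msubst \<sigma> (f i))"
    unfolding g_def d_def msubst_sum msubst_mult msubst_mconst sum_distrib_left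
    by (simp add: divide_inverse mconst_mult mult_ac)
  then have g0: "msubst \<sigma> g = 0" using dep by simp
  moreover have "mvars g \<subseteq> LA"
    unfolding g_def by (intro mvars_sum_subset mvars_mult_subset) (simp_all add: d_def fA)
  ultimately show "g \<in> msubst_relations \<sigma> LA"
    by (simp add: msubst_relations_def)
  show "mvars (h' i) \<subseteq> LB" if "i \<in> I - {i0}" for i
    using that unfolding h'_def d_def
    by (intro mvars_diff_subset mvars_mult_subset) (simp_all add: hB i0(1))
  show split: "(\<Sum>i\<in>I. f i * h i) = h i0 * g + (\<Sum>i\<in>I - {i0}. f i * h' i)"
    unfolding g_def h'_def by (rule sum_mult_eliminate[where d = d, OF fin i0(1) d0])
  show "(\<Sum>i\<in>I - {i0}. msubst \<sigma> (f i) * msubst \<sigma> (h' i)) = 0"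
    using arg_cong[OF split, of "msubst \<sigma>"] zero g0
    by (simp add: msubst_add msubst_mult msubst_sum)
qed

text \<open>Induction on the number of summands: if the images of the \<open>f i\<close> are linearly
  independent, every \<open>h i\<close> is a relation; otherwise eliminate one summand.\<close>

lemma msubst_relations_sum_mult:
  fixes \<sigma> :: "'v \<Rightarrow> ('w, 'k::field) mpoly"
  assumes LM: "LA \<subseteq> M" "LB \<subseteq> M" and VAB: "VA \<inter> VB = {}"
    and \<sigma>A: "\<And>v. v \<in> LA \<Longrightarrow> mvars (\<sigma> v) \<subseteq> VA" and \<sigma>B: "\<And>v. v \<in> LB \<Longrightarrow> mvars (\<sigma> v) \<subseteq> VB"
    and "finite I" "\<And>i. i \<in> I \<Longrightarrow> mvars (f i) \<subseteq> LA" "\<And>i. i \<in> I \<Longrightarrow> mvars (h i) \<subseteq> LB"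
    and "(\<Sum>i\<in>I. msubst \<sigma> (f i) * msubst \<sigma> (h i)) = 0"
  shows "(\<Sum>i\<in>I. f i * h i)
    \<in> ideal_gen_in {p. mvars p \<subseteq> M} (msubst_relations \<sigma> LA \<union> msubst_relations \<sigma> LB)"
  using assms(6-9)
proof (induction I arbitrary: h rule: finite_remove_induct)
  case empty
  then show ?case by (simp add: ideal_gen_in_0)
next
  case (remove I)
  let ?J = "ideal_gen_in {p. mvars p \<subseteq> M} (msubst_relations \<sigma> LA \<union> msubst_relations \<sigma> LB)"
  show ?case
  proof (cases "\<forall>c. (\<Sum>i\<in>I. mconst (c i) * msubst \<sigma> (f i)) = 0 \<longrightarrow> (\<forall>i\<in>I. c i = 0)")
    case True
    have fV: "mvars (msubst \<sigma> (f i)) \<subseteq> VA" if "i \<in> I" for i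
      using mvars_msubst[of \<sigma> "f i"] remove.prems(1)[OF that] \<sigma>A by blast
    have hV: "mvars (msubst \<sigma> (h i)) \<subseteq> VB" if "i \<in> I" for i
      using mvars_msubst[of \<sigma> "h i"] remove.prems(2)[OF that] \<sigma>B by blast
    have "h i \<in> msubst_relations \<sigma> LB" if "i \<in> I" for i
      using sum_mult_eq_0_independentD[OF remove.hyps(1) VAB fV hV remove.prems(3)] True that
        remove.prems(2)[OF that]
      by (simp add: msubst_relations_def)
    then have "f i * h i \<in> ?J" if "i \<in> I" for i
      using remove.prems(1)[OF that] that LM by (intro ideal_gen_in_gen) auto
    then show ?thesis
      by (rule ideal_gen_in_mvars_sum)
  next
    case False
    then obtain c i0 where i0: "i0 \<in> I" "c i0 \<noteq> 0"
      and dep: "(\<Sum>i\<in>I. mconst (c i) * msubst \<sigma> (f i)) = 0"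
      by blast
    obtain g h' where g: "g \<in> msubst_relations \<sigma> LA" and h'B: "\<And>i. i \<in> I - {i0} \<Longrightarrow> mvars (h' i) \<subseteq> LB"
      and split: "(\<Sum>i\<in>I. f i * h i) = h i0 * g + (\<Sum>i\<in>I - {i0}. f i * h' i)"
      and h'_zero: "(\<Sum>i\<in>I - {i0}. msubst \<sigma> (f i) * msubst \<sigma> (h' i)) = 0"
      using msubst_relations_eliminate[OF remove.hyps(1) i0 dep remove.prems] by blast
    have "h i0 * g \<in> ?J"
      using g remove.prems(2)[OF i0(1)] LM by (intro ideal_gen_in_gen) auto
    moreover have "(\<Sum>i\<in>I - {i0}. f i * h' i) \<in> ?J"
      by (rule remove.IH[OF i0(1)]) (simp_all add: remove.prems(1) h'B h'_zero)
    ultimately show ?thesis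
      unfolding split by (rule ideal_gen_in_mvars_add)
  qed
qed

lemma msubst_relations_disjoint_vars:
  fixes \<sigma> :: "'v \<Rightarrow> ('w, 'k::field) mpoly"
  assumes LM: "LA \<subseteq> M" "LB \<subseteq> M" and VAB: "VA \<inter> VB = {}"
    and \<sigma>A: "\<And>v. v \<in> LA \<Longrightarrow> mvars (\<sigma> v) \<subseteq> VA" and \<sigma>B: "\<And>v. v \<in> LB \<Longrightarrow> mvars (\<sigma> v) \<subseteq> VB"
    and q: "q \<in> msubst_relations \<sigma> (LA \<union> LB)"
  shows "q \<in> ideal_gen_in {p. mvars p \<subseteq> M} (msubst_relations \<sigma> LA \<union> msubst_relations \<sigma> LB)"
proof -
  obtain I P where I: "finite I" "\<And>\<beta>. \<beta> \<in> I \<Longrightarrow> Poly_Mapping.keys \<beta> \<subseteq> mvars q \<inter> LA"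
    and P: "\<And>\<beta>. mvars (P \<beta>) \<subseteq> mvars q - LA" and q_eq: "q = (\<Sum>\<beta>\<in>I. Poly_Mapping.single \<beta> 1 * P \<beta>)"
    using mpoly_decompose_vars[of q LA] by blast
  have "mvars q \<subseteq> LA \<union> LB" "msubst \<sigma> q = 0"
    using q by (auto simp: msubst_relations_def)
  then show ?thesis
    unfolding q_eq
  proof (intro msubst_relations_sum_mult[OF LM VAB \<sigma>A \<sigma>B I(1)])
    show "mvars (Poly_Mapping.single \<beta> 1) \<subseteq> LA" if "\<beta> \<in> I" for \<beta>
      using mvars_single[of \<beta>] I(2)[OF that] by blast
    show "mvars (P \<beta>) \<subseteq> LB" for \<beta>
      using P[of \<beta>] \<open>mvars q \<subseteq> LA \<union> LB\<close> by blast
    show "(\<Sum>\<beta>\<in>I. msubst \<sigma> (Poly_Mapping.single \<beta> 1) * msubst \<sigma> (P \<beta>)) = 0"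
      using \<open>msubst \<sigma> q = 0\<close> unfolding q_eq msubst_sum msubst_mult .
  qed
qed

section \<open>Determinants and minors\<close>

lemma ldet_det: "ldet k A = det (mat k k (\<lambda>(i, j). A i j))"
  unfolding ldet_def det_def by (auto simp: lessThan_atLeast0 intro!: sum.cong prod.cong)

lemma ldet_cong: "(\<And>i j. i < k \<Longrightarrow> j < k \<Longrightarrow> A i j = B i j) \<Longrightarrow> ldet k A = ldet k B"
  unfolding ldet_def
proof (intro sum.cong refl arg_cong2[where f=times] prod.cong)
  fix \<pi> i assume "\<pi> \<in> {\<pi>. \<pi> permutes {0..<k}}" "i \<in> {..<k}" "\<And>i j. i < k \<Longrightarrow> j < k \<Longrightarrow> A i j = B i j"
  moreover from this have "\<pi> i < k" using permutes_in_image by fastforce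
  ultimately show "A i (\<pi> i) = B i (\<pi> i)" by auto
qed

lemma ldet_one: "ldet k (\<lambda>i j. if i = j then 1 else 0) = (1 :: 'a::comm_ring_1)"
proof -
  have "mat k k (\<lambda>(i, j). if i = j then 1 else 0) = (1\<^sub>m k :: 'a mat)"
    by (rule eq_matI) auto
  then show ?thesis unfolding ldet_det by simp
qed

lemma ldet_0 [simp]: "ldet 0 A = 1"
  using ldet_one[of 0] by (simp add: ldet_def)

lemma msubst_ldet: "msubst \<sigma> (ldet k A) = ldet k (\<lambda>i j. msubst \<sigma> (A i j))"
  unfolding ldet_def msubst_sum msubst_mult msubst_prod msubst_of_int ..

lemma msubst_ldet_eq_1:
  assumes "\<And>i j. i < k \<Longrightarrow> j < k \<Longrightarrow> msubst \<sigma> (A i j) = (if i = j then 1 else 0)"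
  shows "msubst \<sigma> (ldet k A) = 1"
proof -
  have "ldet k (\<lambda>i j. msubst \<sigma> (A i j)) = ldet k (\<lambda>i j. if i = j then 1 else 0)"
    by (rule ldet_cong) (rule assms)
  then show ?thesis unfolding msubst_ldet by (simp add: ldet_one)
qed

lemma sum_cofactor_mult_column:
  assumes A: "A \<in> carrier_mat n n" and ij: "i < n" "j < n"
  shows "(\<Sum>k<n. cofactor A k i * A $$ (k, j)) = (if i = j then det A else 0)"
proof -
  have "(adj_mat A * A) $$ (i, j) = (det A \<cdot>\<^sub>m 1\<^sub>m n) $$ (i, j)"
    using adj_mat(3)[OF A] by simp
  moreover have "(adj_mat A * A) $$ (i, j) = (\<Sum>k<n. cofactor A k i * A $$ (k, j))"
    using A ij adj_mat(1)[OF A] by (simp add: scalar_prod_def adj_mat_def lessThan_atLeast0)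
  moreover have "(det A \<cdot>\<^sub>m 1\<^sub>m n) $$ (i, j) = (if i = j then det A else 0)"
    using ij by simp
  ultimately show ?thesis by simp
qed

lemma sum_row_mult_cofactor:
  assumes A: "A \<in> carrier_mat n n" and ij: "i < n" "j < n"
  shows "(\<Sum>k<n. A $$ (i, k) * cofactor A j k) = (if i = j then det A else 0)"
proof -
  have "(A * adj_mat A) $$ (i, j) = (det A \<cdot>\<^sub>m 1\<^sub>m n) $$ (i, j)"
    using adj_mat(2)[OF A] by simp
  moreover have "(A * adj_mat A) $$ (i, j) = (\<Sum>k<n. A $$ (i, k) * cofactor A j k)"
    using A ij adj_mat(1)[OF A] by (simp add: scalar_prod_def adj_mat_def lessThan_atLeast0)
  moreover have "(det A \<cdot>\<^sub>m 1\<^sub>m n) $$ (i, j) = (if i = j then det A else 0)"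
    using ij by simp
  ultimately show ?thesis by simp
qed

lemma sorted_list_of_set_remove_nth:
  assumes "i < k" "a < k - 1"
  shows "sorted_list_of_set ({0..<k} - {i}) ! a = insert_index i a"
proof -
  have "sorted_list_of_set ({0..<k} - {i}) = [0..<i] @ [Suc i..<k]"
    by (rule sorted_distinct_set_unique) (use assms in \<open>auto simp: sorted_append\<close>)
  then show ?thesis using assms by (auto simp: nth_append insert_index_def)
qed

text \<open>A linear order on the coordinates only serves to make the polynomial ring over them
  an integral domain: the library's \<open>idom\<close> instance of \<open>poly_mapping\<close> needs ordered variables.\<close>

fun wvar_code :: "wvar \<Rightarrow> nat" where
  "wvar_code (Xc i j) = 2 * prod_encode (i, j)"
| "wvar_code (Yc i j) = 2 * prod_encode (i, j) + 1"

lemma wvar_code_inj: "wvar_code x = wvar_code y \<Longrightarrow> x = y"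
  by (cases x; cases y) (auto dest: inj_onD[OF inj_prod_encode, of "(a, b)" "(c, d)" for a b c d]
      simp: prod_encode_eq, presburger+)

instantiation wvar :: linorder
begin

definition less_eq_wvar :: "wvar \<Rightarrow> wvar \<Rightarrow> bool" where
  "less_eq_wvar x y \<longleftrightarrow> wvar_code x \<le> wvar_code y"

definition less_wvar :: "wvar \<Rightarrow> wvar \<Rightarrow> bool" where
  "less_wvar x y \<longleftrightarrow> wvar_code x < wvar_code y"

instance
  by standard (auto simp: less_eq_wvar_def less_wvar_def intro: wvar_code_inj)

end

definition left_block :: "nat \<Rightarrow> (wvar, 'k::comm_ring_1) mpoly mat" where
  "left_block b = mat b b (\<lambda>(r, c). Vsbar r c)"

definition lower_block :: "nat \<Rightarrow> nat \<Rightarrow> (wvar, 'k::comm_ring_1) mpoly mat" where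
  "lower_block n a = mat a a (\<lambda>(r, c). Vbar (n - a + r) c)"

lemma left_block_carrier: "left_block b \<in> carrier_mat b b"
  by (simp add: left_block_def)

lemma lower_block_carrier: "lower_block n a \<in> carrier_mat a a"
  by (simp add: lower_block_def)

lemma left_minor_empty [simp]: "left_minor {} = 1"
  by (simp add: left_minor_def)

lemma lower_minor_empty [simp]: "lower_minor n {} = 1"
  by (simp add: lower_minor_def)

lemma left_minor_atLeastLessThan: "left_minor {0..<b} = det (left_block b)"
  unfolding left_minor_def ldet_det left_block_def by (intro arg_cong[where f=det] eq_matI) auto

lemma lower_minor_atLeastLessThan: "lower_minor n {0..<a} = det (lower_block n a)"
  unfolding lower_minor_def ldet_det lower_block_def by (intro arg_cong[where f=det] eq_matI) auto

lemma left_minor_remove: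
  assumes "i < b"
  shows "left_minor ({0..<b} - {i}) = det (mat_delete (left_block b) i (b - 1))"
  unfolding left_minor_def ldet_det
proof (intro arg_cong[where f=det] eq_matI)
  fix r c assume "r < dim_row (mat_delete (left_block b) i (b - 1))"
    "c < dim_col (mat_delete (left_block b) i (b - 1))"
  then have r: "r < b - 1" and c: "c < b - 1" by (auto simp: left_block_def)
  have "insert_index i r < b" using r assms by (auto simp: insert_index_def)
  then show "mat (card ({0..<b} - {i})) (card ({0..<b} - {i}))
      (\<lambda>(r, c). Vsbar (sorted_list_of_set ({0..<b} - {i}) ! r) c) $$ (r, c)
      = mat_delete (left_block b) i (b - 1) $$ (r, c)"
    using r c assms
    by (auto simp: mat_delete_def left_block_def sorted_list_of_set_remove_nth insert_index_def)
qed (use assms in \<open>auto simp: left_block_def\<close>)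

lemma lower_minor_remove:
  assumes "a \<le> n" "j < a"
  shows "lower_minor n ({0..<a} - {j}) = det (mat_delete (lower_block n a) 0 j)"
  unfolding lower_minor_def ldet_det
proof (intro arg_cong[where f=det] eq_matI)
  fix r c assume "r < dim_row (mat_delete (lower_block n a) 0 j)"
    "c < dim_col (mat_delete (lower_block n a) 0 j)"
  then have r: "r < a - 1" and c: "c < a - 1" by (auto simp: lower_block_def)
  have "insert_index j c < a" using c assms by (auto simp: insert_index_def)
  moreover have "n - (a - 1) + r = n - a + Suc r" using assms by simp
  ultimately show "mat (card ({0..<a} - {j})) (card ({0..<a} - {j}))
      (\<lambda>(r, c). Vbar (n - card ({0..<a} - {j}) + r) (sorted_list_of_set ({0..<a} - {j}) ! c)) $$ (r, c)
      = mat_delete (lower_block n a) 0 j $$ (r, c)"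
    using r c assms
    by (auto simp: mat_delete_def lower_block_def sorted_list_of_set_remove_nth insert_index_def)
qed (use assms in \<open>auto simp: lower_block_def\<close>)

lemma mvars_lower_minor:
  assumes "card S \<le> n"
  shows "mvars (lower_minor n S :: (wvar, 'k::comm_ring_1) mpoly) \<subseteq> {Xc r c | r c. n - card S \<le> r \<and> r < n}"
  unfolding lower_minor_def
proof (rule order.trans[OF mvars_ldet], intro UN_least)
  fix i j assume "i \<in> {..<card S}"
  then have "n - card S \<le> n - card S + i" "n - card S + i < n" using assms by auto
  moreover have "mvars (Vbar (n - card S + i) (sorted_list_of_set S ! j) :: (wvar, 'k) mpoly)
      \<subseteq> {Xc (n - card S + i) (sorted_list_of_set S ! j)}"
    unfolding Vbar_def by (rule mvars_mvar)
  ultimately show "mvars (Vbar (n - card S + i) (sorted_list_of_set S ! j) :: (wvar, 'k) mpoly)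
      \<subseteq> {Xc r c | r c. n - card S \<le> r \<and> r < n}"
    by blast
qed

lemma mvars_left_minor:
  "mvars (left_minor S :: (wvar, 'k::comm_ring_1) mpoly) \<subseteq> {Yc r c | r c. c < card S}"
  unfolding left_minor_def
proof (rule order.trans[OF mvars_ldet], intro UN_least)
  fix i j assume "j \<in> {..<card S}"
  moreover have "mvars (Vsbar (sorted_list_of_set S ! i) j :: (wvar, 'k) mpoly)
      \<subseteq> {Yc (sorted_list_of_set S ! i) j}"
    unfolding Vsbar_def by (rule mvars_mvar)
  ultimately show "mvars (Vsbar (sorted_list_of_set S ! i) j :: (wvar, 'k) mpoly) \<subseteq> {Yc r c | r c. c < card S}"
    by blast
qed

lemma sum_cofactor_left_block:
  assumes "k < b"
  shows "(\<Sum>i<b. cofactor (left_block b) i (b - 1) * Vsbar i k)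
    = (if k = b - 1 then det (left_block b) else (0 :: (wvar, 'k::comm_ring_1) mpoly))"
proof -
  have "(\<Sum>i<b. cofactor (left_block b) i (b - 1) * Vsbar i k)
      = (\<Sum>i<b. cofactor (left_block b) i (b - 1) * left_block b $$ (i, k))"
    using assms by (intro sum.cong refl) (simp add: left_block_def)
  also have "\<dots> = (if b - 1 = k then det (left_block b) else 0)"
    by (rule sum_cofactor_mult_column[OF left_block_carrier]) (use assms in auto)
  finally show ?thesis by auto
qed

lemma sum_cofactor_lower_block:
  assumes "n - a \<le> k" "k < n" "a \<le> n"
  shows "(\<Sum>j<a. cofactor (lower_block n a) 0 j * Vbar k j)
    = (if k = n - a then det (lower_block n a) else (0 :: (wvar, 'k::comm_ring_1) mpoly))"
proof -
  have "(\<Sum>j<a. cofactor (lower_block n a) 0 j * Vbar k j)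
      = (\<Sum>j<a. lower_block n a $$ (k - (n - a), j) * cofactor (lower_block n a) 0 j)"
    using assms by (intro sum.cong refl) (simp add: lower_block_def mult.commute)
  also have "\<dots> = (if k - (n - a) = 0 then det (lower_block n a) else 0)"
    by (rule sum_row_mult_cofactor[OF lower_block_carrier]) (use assms in auto)
  finally show ?thesis using assms by auto
qed

text \<open>Expanding \<open>det (left_block b)\<close> along its last column and \<open>det (lower_block n a)\<close> along
  its first row: when \<open>b - 1 = n - a\<close> the two expansions share exactly one index.\<close>

lemma sum_cofactor_mult_entries:
  assumes a: "1 \<le> a" "a \<le> n" and b: "b = n + 1 - a"
  shows "(\<Sum>i<b. \<Sum>j<a. cofactor (left_block b) i (b - 1) * cofactor (lower_block n a) 0 j
      * (\<Sum>k<n. Vsbar i k * Vbar k j))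
    = det (left_block b) * (det (lower_block n a) :: (wvar, 'k::comm_ring_1) mpoly)"
proof -
  define P where "P k = (\<Sum>i<b. cofactor (left_block b) i (b - 1) * (Vsbar i k :: (wvar, 'k) mpoly))" for k
  define Q where "Q k = (\<Sum>j<a. cofactor (lower_block n a) 0 j * (Vbar k j :: (wvar, 'k) mpoly))" for k
  have PQ: "P k * Q k = (if k = b - 1 then det (left_block b) * det (lower_block n a) else 0)"
    if "k < n" for k
  proof (cases "k < b")
    case True
    have "P k = (if k = b - 1 then det (left_block b) else 0)"
      unfolding P_def by (rule sum_cofactor_left_block[OF True])
    moreover have "Q (b - 1) = det (lower_block n a)"
      unfolding Q_def using sum_cofactor_lower_block[of n a "b - 1"] a b by simp
    ultimately show ?thesis by simp
  next
    case False
    then have "n - a \<le> k" "k \<noteq> n - a" using a b by auto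
    then have "Q k = 0"
      unfolding Q_def using sum_cofactor_lower_block[of n a k] a that by simp
    then show ?thesis using False a b by auto
  qed
  have "(\<Sum>i<b. \<Sum>j<a. cofactor (left_block b) i (b - 1) * cofactor (lower_block n a) 0 j
      * (\<Sum>k<n. Vsbar i k * Vbar k j))
    = (\<Sum>i<b. \<Sum>j<a. \<Sum>k<n. (cofactor (left_block b) i (b - 1) * Vsbar i k)
      * (cofactor (lower_block n a) 0 j * Vbar k j))"
    unfolding sum_distrib_left by (intro sum.cong refl) (simp add: mult_ac)
  also have "\<dots> = (\<Sum>k<n. \<Sum>i<b. \<Sum>j<a. (cofactor (left_block b) i (b - 1) * Vsbar i k)
      * (cofactor (lower_block n a) 0 j * Vbar k j))"
    by (subst sum.swap, subst (2) sum.swap) (rule refl)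
  also have "\<dots> = (\<Sum>k<n. P k * Q k)"
    unfolding P_def Q_def sum_product ..
  also have "\<dots> = (\<Sum>k<n. if k = b - 1 then det (left_block b) * det (lower_block n a) else 0)"
    by (rule sum.cong[OF refl]) (simp add: PQ)
  also have "\<dots> = det (left_block b) * det (lower_block n a)"
    using a b by (simp only: sum.delta finite_lessThan) simp
  finally show ?thesis .
qed

section \<open>An extra relation when \<open>n < l + m\<close>\<close>

abbreviation minor_relations_ideal :: "'k::comm_ring_1 itself \<Rightarrow> nat \<Rightarrow> nat \<Rightarrow> nat \<Rightarrow> (mlab, 'k) mpoly set" where
  "minor_relations_ideal K n l m \<equiv> ideal_gen_in (polys_in K (M_labels n l m))
     (relations K n (low_labels n l) \<union> relations K n (lft_labels n m))"

lemma relations_eq_msubst_relations: "relations TYPE('k::comm_ring_1) n L = msubst_relations (gen_poly n) L"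
  by (simp add: relations_def msubst_relations_def)

lemma minor_relations_ideal_subset_relations:
  "minor_relations_ideal TYPE('k::comm_ring_1) n l m \<subseteq> relations TYPE('k) n (M_labels n l m)"
proof
  fix x assume x: "x \<in> minor_relations_ideal TYPE('k) n l m"
  have "mvars x \<subseteq> M_labels n l m"
    by (rule mvars_ideal_gen_in[OF _ x[unfolded polys_in_def]]) (auto simp: relations_def M_labels_def)
  moreover have "msubst (gen_poly n) x = (0 :: (wvar, 'k) mpoly)"
    by (rule msubst_ideal_gen_in_eq_0[OF _ x]) (auto simp: relations_def)
  ultimately show "x \<in> relations TYPE('k) n (M_labels n l m)"
    by (simp add: relations_def)
qed

definition perturb_gen :: "nat \<Rightarrow> (wvar, 'k::comm_ring_1) mpoly \<Rightarrow> mlab \<Rightarrow> (wvar, 'k) mpoly" where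
  "perturb_gen n e L = (if L = Ent 0 0 then gen_poly n L + e else gen_poly n L)"

lemma msubst_perturb_gen_minor_relations_ideal:
  assumes "x \<in> minor_relations_ideal TYPE('k::comm_ring_1) n l m"
  shows "msubst (perturb_gen n e) x = 0"
proof (rule msubst_ideal_gen_in_eq_0[OF _ assms])
  fix g assume "g \<in> relations TYPE('k) n (low_labels n l) \<union> relations TYPE('k) n (lft_labels n m)"
  then have g: "mvars g \<subseteq> low_labels n l \<union> lft_labels n m" "msubst (gen_poly n) g = 0"
    by (auto simp: relations_def)
  have "msubst (perturb_gen n e) g = msubst (gen_poly n) g"
  proof (rule msubst_cong)
    fix v assume "v \<in> mvars g"
    then show "perturb_gen n e v = gen_poly n v"
      using g(1) by (auto simp: perturb_gen_def low_labels_def lft_labels_def)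
  qed
  then show "msubst (perturb_gen n e) g = 0" using g(2) by simp
qed

text \<open>Minors with an empty index set equal \<open>1\<close> but have no label.\<close>

definition lft_var :: "nat set \<Rightarrow> (mlab, 'k::comm_ring_1) mpoly" where
  "lft_var S = (if S = {} then 1 else mvar (Lft S))"

definition low_var :: "nat set \<Rightarrow> (mlab, 'k::comm_ring_1) mpoly" where
  "low_var S = (if S = {} then 1 else mvar (Low S))"

lemma perturb_gen_Ent:
  "perturb_gen n e (Ent i j) = (\<Sum>k<n. Vsbar i k * Vbar k j) + (if i = 0 \<and> j = 0 then e else 0)"
  by (simp add: perturb_gen_def gen_poly_def)

lemma perturb_gen_Lft [simp]: "perturb_gen n e (Lft S) = left_minor S"
  by (simp add: perturb_gen_def gen_poly_def)

lemma perturb_gen_Low [simp]: "perturb_gen n e (Low S) = lower_minor n S"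
  by (simp add: perturb_gen_def gen_poly_def)

lemma msubst_perturb_gen_lft_var [simp]: "msubst (perturb_gen n e) (lft_var S) = left_minor S"
  by (simp add: lft_var_def)

lemma msubst_perturb_gen_low_var [simp]: "msubst (perturb_gen n e) (low_var S) = lower_minor n S"
  by (simp add: low_var_def)

text \<open>The identity \<open>sum_cofactor_mult_entries\<close> written in the labels.\<close>

definition cofactor_relation :: "nat \<Rightarrow> nat \<Rightarrow> nat \<Rightarrow> (mlab, 'k::comm_ring_1) mpoly" where
  "cofactor_relation n a b =
     (\<Sum>i<b. \<Sum>j<a. (-1) ^ (i + (b - 1)) * (-1) ^ j * mvar (Ent i j)
        * lft_var ({0..<b} - {i}) * low_var ({0..<a} - {j}))
     - mvar (Lft {0..<b}) * mvar (Low {0..<a})"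

lemma msubst_cofactor_relation:
  assumes a: "1 \<le> a" "a \<le> n" and b: "b = n + 1 - a"
  shows "msubst (perturb_gen n e) (cofactor_relation n a b)
    = (-1) ^ (b - 1) * e * left_minor ({0..<b} - {0}) * (lower_minor n ({0..<a} - {0}) :: (wvar, 'k::comm_ring_1) mpoly)"
proof -
  let ?\<sigma> = "perturb_gen n e :: mlab \<Rightarrow> (wvar, 'k) mpoly"
  define E where "E i j = (\<Sum>k<n. Vsbar i k * Vbar k j :: (wvar, 'k) mpoly)" for i j
  define c where "c i j = (-1) ^ (i + (b - 1)) * (-1) ^ j * left_minor ({0..<b} - {i})
    * (lower_minor n ({0..<a} - {j}) :: (wvar, 'k) mpoly)" for i j
  have c_cofactor: "c i j = cofactor (left_block b) i (b - 1) * cofactor (lower_block n a) 0 j"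
    if "i < b" "j < a" for i j
    using that a unfolding c_def cofactor_def left_minor_remove[OF that(1)] lower_minor_remove[OF a(2) that(2)]
    by (simp add: algebra_simps)
  have "msubst ?\<sigma> (cofactor_relation n a b)
      = (\<Sum>i<b. \<Sum>j<a. c i j * (E i j + (if i = 0 \<and> j = 0 then e else 0))) - left_minor {0..<b} * lower_minor n {0..<a}"
    unfolding cofactor_relation_def c_def
    by (simp add: msubst_diff msubst_sum msubst_mult msubst_power msubst_uminus perturb_gen_Ent E_def mult_ac)
  also have "\<dots> = (\<Sum>i<b. \<Sum>j<a. cofactor (left_block b) i (b - 1) * cofactor (lower_block n a) 0 j * E i j)
      + (\<Sum>i<b. \<Sum>j<a. if i = 0 \<and> j = 0 then c i j * e else 0) - det (left_block b) * det (lower_block n a)"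
    unfolding left_minor_atLeastLessThan lower_minor_atLeastLessThan sum.distrib[symmetric]
    by (intro arg_cong2[where f=minus] refl sum.cong) (auto simp: c_cofactor algebra_simps)
  also have "\<dots> = c 0 0 * e"
    using a b unfolding E_def sum_cofactor_mult_entries[OF a b] by (simp add: sum_sum_if_eq)
  finally show ?thesis
    using a b by (simp add: c_def)
qed

definition unit_point :: "nat \<Rightarrow> nat \<Rightarrow> wvar \<Rightarrow> (wvar, 'k::comm_ring_1) mpoly" where
  "unit_point n a v = (case v of
      Xc i j \<Rightarrow> if i + a = n + j then 1 else 0
    | Yc i j \<Rightarrow> if i = Suc j then 1 else 0)"

lemma msubst_unit_point_left_minor:
  "1 \<le> b \<Longrightarrow> msubst (unit_point n a) (left_minor ({0..<b} - {0})) = 1"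
  unfolding left_minor_def
  by (rule msubst_ldet_eq_1) (auto simp: sorted_list_of_set_remove_nth insert_index_def Vsbar_def unit_point_def)

lemma msubst_unit_point_lower_minor_remove:
  "1 \<le> a \<Longrightarrow> a \<le> n \<Longrightarrow> msubst (unit_point n a) (lower_minor n ({0..<a} - {0})) = 1"
  unfolding lower_minor_def
  by (rule msubst_ldet_eq_1) (auto simp: sorted_list_of_set_remove_nth insert_index_def Vbar_def unit_point_def)

lemma msubst_unit_point_lower_minor:
  "a \<le> n \<Longrightarrow> msubst (unit_point n a) (lower_minor n {0..<a}) = 1"
  unfolding lower_minor_def
  by (rule msubst_ldet_eq_1) (auto simp: Vbar_def unit_point_def)

lemma mvars_cofactor_relation:
  assumes a: "a = min l n" "1 \<le> a" and b: "b = n + 1 - a" "b \<le> m"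
  shows "mvars (cofactor_relation n a b :: (mlab, 'k::comm_ring_1) mpoly) \<subseteq> M_labels n l m"
proof -
  have ent: "mvars (mvar (Ent i j) :: (mlab, 'k) mpoly) \<subseteq> M_labels n l m" if "i < b" "j < a" for i j
    using mvars_mvar[of "Ent i j"] that a b by (auto simp: M_labels_def ent_labels_def)
  have lft: "mvars (lft_var S :: (mlab, 'k) mpoly) \<subseteq> M_labels n l m" if "S \<subseteq> {0..<b}" for S
  proof (cases "S = {}")
    case False
    have "card S \<le> b" using that card_mono[OF _ that] by simp
    then have "Lft S \<in> lft_labels n m"
      unfolding lft_labels_def using False that a b by (auto simp: Suc_le_eq card_gt_0_iff intro: finite_subset)
    then show ?thesis using mvars_mvar[of "Lft S"] False by (auto simp: lft_var_def M_labels_def)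
  qed (simp add: lft_var_def)
  have low: "mvars (low_var S :: (mlab, 'k) mpoly) \<subseteq> M_labels n l m" if "S \<subseteq> {0..<a}" for S
  proof (cases "S = {}")
    case False
    have "card S \<le> a" using that card_mono[OF _ that] by simp
    then have "Low S \<in> low_labels n l"
      unfolding low_labels_def using False that a b by (auto simp: Suc_le_eq card_gt_0_iff intro: finite_subset)
    then show ?thesis using mvars_mvar[of "Low S"] False by (auto simp: low_var_def M_labels_def)
  qed (simp add: low_var_def)
  have full: "mvar (Lft {0..<b}) = (lft_var {0..<b} :: (mlab, 'k) mpoly)"
    "mvar (Low {0..<a}) = (low_var {0..<a} :: (mlab, 'k) mpoly)"
    using a b by (auto simp: lft_var_def low_var_def)
  have sign: "mvars ((-1) ^ k :: (mlab, 'k) mpoly) \<subseteq> M_labels n l m" for k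
    using mvars_power[of "-1 :: (mlab, 'k) mpoly" k] by simp
  show ?thesis
    unfolding cofactor_relation_def full
    by (intro mvars_diff_subset mvars_sum_subset mvars_mult_subset ent lft low sign) auto
qed

lemma relation_perturb_gen_ne_0:
  assumes l: "0 < l" and m: "0 < m" and lmn: "n < l + m"
  obtains r :: "(mlab, 'k::field) mpoly"
  where "r \<in> relations TYPE('k) n (M_labels n l m)" "msubst (perturb_gen n 1) r \<noteq> 0"
proof (cases "n = 0")
  case True
  show ?thesis
  proof
    show "mvar (Ent 0 0) \<in> relations TYPE('k) n (M_labels n l m)"
      using mvars_mvar[of "Ent 0 0"] l m True
      by (auto simp: relations_def gen_poly_def M_labels_def ent_labels_def)
    show "msubst (perturb_gen n 1) (mvar (Ent 0 0)) \<noteq> (0 :: (wvar, 'k) mpoly)"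
      using True by (simp add: perturb_gen_def gen_poly_def)
  qed
next
  case False
  define a where "a = min l n"
  define b where "b = n + 1 - a"
  have a1: "1 \<le> a" "a \<le> n" using False l by (auto simp: a_def)
  have b1: "1 \<le> b" "b \<le> m" using a1 lmn m by (auto simp: b_def a_def min_def)
  have perturb_0: "gen_poly n = perturb_gen n 0"
    by (simp add: perturb_gen_def fun_eq_iff)
  have "msubst (gen_poly n) (cofactor_relation n a b) = (0 :: (wvar, 'k) mpoly)"
    unfolding perturb_0 msubst_cofactor_relation[OF a1 b_def] by simp
  moreover have "msubst (unit_point n a) (msubst (perturb_gen n 1) (cofactor_relation n a b))
      = ((-1) ^ (b - 1) :: (wvar, 'k) mpoly)"
    unfolding msubst_cofactor_relation[OF a1 b_def]
    by (simp add: msubst_mult msubst_power msubst_uminus msubst_unit_point_left_minor[OF b1(1)]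
        msubst_unit_point_lower_minor_remove[OF a1])
  ultimately show ?thesis
    using mvars_cofactor_relation[OF a_def a1(1) b_def b1(2)]
    by (intro that[of "cofactor_relation n a b"]) (auto simp: relations_def)
qed

lemma relations_ne_minor_relations_ideal:
  assumes "0 < l" "0 < m" "n < l + m"
  shows "relations TYPE('k::field) n (M_labels n l m) \<noteq> minor_relations_ideal TYPE('k) n l m"
proof
  obtain r :: "(mlab, 'k) mpoly" where "r \<in> relations TYPE('k) n (M_labels n l m)"
    and "msubst (perturb_gen n 1) r \<noteq> 0"
    using relation_perturb_gen_ne_0[OF assms] by blast
  moreover assume "relations TYPE('k) n (M_labels n l m) = minor_relations_ideal TYPE('k) n l m"
  ultimately show False
    using msubst_perturb_gen_minor_relations_ideal by blast
qed

section \<open>No further relations when \<open>l + m \<le> n\<close>\<close>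

text \<open>The coordinates \<open>Xc (n + i) s\<close> lie outside \<open>Vbar\<close>; they serve as the fresh
  indeterminates \<open>t\<^sub>i\<^sub>s\<close> in \<open>y\<^sub>i \<mapsto> t\<^sub>i adj X\<close>.\<close>

definition cofactor_subst :: "nat \<Rightarrow> nat \<Rightarrow> nat \<Rightarrow> wvar \<Rightarrow> (wvar, 'k::comm_ring_1) mpoly" where
  "cofactor_subst n l m v = (case v of
      Xc k j \<Rightarrow> if n - l \<le> k then mvar (Xc k j) else 0
    | Yc i k \<Rightarrow> if k < m then mvar (Yc i k)
                else if n - l \<le> k \<and> k < n
                then (\<Sum>s<l. mvar (Xc (n + i) s) * cofactor (lower_block n l) (k - (n - l)) s)
                else 0)"

lemma sum_lessThan_split_top:
  assumes "(l::nat) \<le> n"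
  shows "(\<Sum>k<n. f k) = (\<Sum>k<n - l. f k) + (\<Sum>r<l. f (n - l + r))"
proof -
  have "(\<Sum>k<q + r. f k) = (\<Sum>k<q. f k) + (\<Sum>i<r. f (q + i))" for q r :: nat
    by (induction r) (simp_all add: add.assoc)
  then show ?thesis using assms by (metis le_add_diff_inverse2)
qed

lemma msubst_cofactor_subst_Ent:
  assumes lmn: "l + m \<le> n" and j: "j < l"
  shows "msubst (cofactor_subst n l m) (gen_poly n (Ent i j))
    = lower_minor n {0..<l} * (mvar (Xc (n + i) j) :: (wvar, 'k::comm_ring_1) mpoly)"
proof -
  let ?X = "lower_block n l :: (wvar, 'k) mpoly mat"
  let ?\<tau> = "cofactor_subst n l m :: wvar \<Rightarrow> (wvar, 'k) mpoly"
  have ln: "l \<le> n" using lmn by simp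
  have "msubst ?\<tau> (gen_poly n (Ent i j)) = (\<Sum>k<n. ?\<tau> (Yc i k) * ?\<tau> (Xc k j))"
    unfolding gen_poly_def by (simp add: msubst_sum msubst_mult Vsbar_def Vbar_def)
  also have "\<dots> = (\<Sum>k<n - l. ?\<tau> (Yc i k) * ?\<tau> (Xc k j)) + (\<Sum>r<l. ?\<tau> (Yc i (n - l + r)) * ?\<tau> (Xc (n - l + r) j))"
    by (rule sum_lessThan_split_top[OF ln])
  also have "(\<Sum>k<n - l. ?\<tau> (Yc i k) * ?\<tau> (Xc k j)) = 0"
    by (rule sum.neutral) (auto simp: cofactor_subst_def)
  also have "(\<Sum>r<l. ?\<tau> (Yc i (n - l + r)) * ?\<tau> (Xc (n - l + r) j))
      = (\<Sum>r<l. (\<Sum>s<l. mvar (Xc (n + i) s) * cofactor ?X r s) * ?X $$ (r, j))"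
  proof (rule sum.cong[OF refl])
    fix r assume "r \<in> {..<l}"
    moreover have "\<not> n - l + r < m" using lmn by simp
    ultimately show "?\<tau> (Yc i (n - l + r)) * ?\<tau> (Xc (n - l + r) j)
        = (\<Sum>s<l. mvar (Xc (n + i) s) * cofactor ?X r s) * ?X $$ (r, j)"
      using j ln by (simp add: cofactor_subst_def lower_block_def Vbar_def)
  qed
  also have "\<dots> = (\<Sum>s<l. mvar (Xc (n + i) s) * (\<Sum>r<l. cofactor ?X r s * ?X $$ (r, j)))"
    unfolding sum_distrib_right sum_distrib_left by (subst sum.swap) (simp add: mult_ac)
  also have "\<dots> = (\<Sum>s<l. mvar (Xc (n + i) s) * (if s = j then det ?X else 0))"
    using j by (intro sum.cong refl arg_cong2[where f=times] sum_cofactor_mult_column[OF lower_block_carrier]) auto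
  also have "\<dots> = mvar (Xc (n + i) j) * det ?X"
    using j by (simp add: if_distrib[of "\<lambda>x. _ * x"] sum.delta' cong: if_cong)
  finally show ?thesis by (simp add: lower_minor_atLeastLessThan mult.commute)
qed

lemma msubst_cofactor_subst_low:
  assumes "l + m \<le> n" "L \<in> low_labels n l"
  shows "msubst (cofactor_subst n l m) (gen_poly n L) = (gen_poly n L :: (wvar, 'k::comm_ring_1) mpoly)"
proof -
  obtain S where S: "L = Low S" "card S \<le> l" using assms by (auto simp: low_labels_def)
  show ?thesis unfolding S(1) gen_poly_def mlab.case
  proof (rule msubst_eq_self)
    fix v assume "v \<in> mvars (lower_minor n S :: (wvar, 'k) mpoly)"
    then obtain r c where "v = Xc r c" "n - card S \<le> r"
      using mvars_lower_minor[of S n] S(2) assms(1) by auto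
    then show "cofactor_subst n l m v = mvar v" using S(2) by (simp add: cofactor_subst_def)
  qed
qed

lemma msubst_cofactor_subst_lft:
  assumes "L \<in> lft_labels n m"
  shows "msubst (cofactor_subst n l m) (gen_poly n L) = (gen_poly n L :: (wvar, 'k::comm_ring_1) mpoly)"
proof -
  obtain S where S: "L = Lft S" "card S \<le> m" using assms by (auto simp: lft_labels_def)
  show ?thesis unfolding S(1) gen_poly_def mlab.case
  proof (rule msubst_eq_self)
    fix v assume "v \<in> mvars (left_minor S :: (wvar, 'k) mpoly)"
    then obtain r c where "v = Yc r c" "c < card S" using mvars_left_minor by blast
    then show "cofactor_subst n l m v = mvar v" using S(2) by (simp add: cofactor_subst_def)
  qed
qed

lemma lower_minor_atLeastLessThan_ne_0:
  assumes "l \<le> n"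
  shows "lower_minor n {0..<l} \<noteq> (0 :: (wvar, 'k::comm_ring_1) mpoly)"
proof
  assume "lower_minor n {0..<l} = (0 :: (wvar, 'k) mpoly)"
  then have "(1 :: (wvar, 'k) mpoly) = 0"
    using msubst_unit_point_lower_minor[OF assms] by (metis msubst_0)
  then show False by simp
qed

definition scaled_gen :: "nat \<Rightarrow> nat \<Rightarrow> mlab \<Rightarrow> (wvar, 'k::comm_ring_1) mpoly" where
  "scaled_gen n l L = (case L of
      Ent i j \<Rightarrow> lower_minor n {0..<l} * mvar (Xc (n + i) j)
    | _ \<Rightarrow> gen_poly n L)"

lemma msubst_scaled_gen_relation:
  assumes lmn: "l + m \<le> n" and p: "p \<in> relations TYPE('k::comm_ring_1) n (M_labels n l m)"
  shows "msubst (scaled_gen n l) p = (0 :: (wvar, 'k) mpoly)"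
proof -
  have "msubst (scaled_gen n l) p = msubst (\<lambda>v. msubst (cofactor_subst n l m) (gen_poly n v)) p"
  proof (rule msubst_cong)
    fix L assume "L \<in> mvars p"
    then have L: "L \<in> M_labels n l m" using p by (auto simp: relations_def)
    show "scaled_gen n l L = (msubst (cofactor_subst n l m) (gen_poly n L) :: (wvar, 'k) mpoly)"
    proof (cases "L \<in> ent_labels l m")
      case True
      then obtain i j where "L = Ent i j" "j < l" by (auto simp: ent_labels_def)
      then show ?thesis by (simp add: scaled_gen_def msubst_cofactor_subst_Ent[OF lmn])
    next
      case False
      then have "L \<in> low_labels n l \<or> L \<in> lft_labels n m" "scaled_gen n l L = gen_poly n L"
        using L by (auto simp: M_labels_def low_labels_def lft_labels_def scaled_gen_def)
      then show ?thesis using msubst_cofactor_subst_low[OF lmn] msubst_cofactor_subst_lft by metis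
    qed
  qed
  also have "\<dots> = msubst (cofactor_subst n l m) (msubst (gen_poly n) p)"
    by (simp add: msubst_msubst)
  also have "\<dots> = 0"
    using p by (simp add: relations_def)
  finally show ?thesis .
qed

definition ent_var :: "nat \<Rightarrow> mlab \<Rightarrow> wvar" where
  "ent_var n L = (case L of Ent i j \<Rightarrow> Xc (n + i) j | _ \<Rightarrow> Xc 0 0)"

definition ent_monom :: "nat \<Rightarrow> (mlab \<Rightarrow>\<^sub>0 nat) \<Rightarrow> (wvar \<Rightarrow>\<^sub>0 nat)" where
  "ent_monom n \<beta> = (\<Sum>v\<in>Poly_Mapping.keys \<beta>. Poly_Mapping.single (ent_var n v) (Poly_Mapping.lookup \<beta> v))"

lemma msubst_scaled_gen_monom:
  assumes "Poly_Mapping.keys \<beta> \<subseteq> ent_labels l m"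
  shows "msubst (scaled_gen n l) (Poly_Mapping.single \<beta> 1)
    = (lower_minor n {0..<l} :: (wvar, 'k::comm_ring_1) mpoly) ^ sum (Poly_Mapping.lookup \<beta>) (Poly_Mapping.keys \<beta>)
      * Poly_Mapping.single (ent_monom n \<beta>) 1"
proof -
  let ?d = "lower_minor n {0..<l} :: (wvar, 'k) mpoly"
  have "scaled_gen n l v = ?d * mvar (ent_var n v)" if "v \<in> Poly_Mapping.keys \<beta>" for v
    using assms that by (auto simp: ent_labels_def scaled_gen_def ent_var_def)
  then have "msubst (scaled_gen n l) (Poly_Mapping.single \<beta> 1)
      = (\<Prod>v\<in>Poly_Mapping.keys \<beta>. (?d * mvar (ent_var n v)) ^ Poly_Mapping.lookup \<beta> v)"
    unfolding msubst_single msubst_monom_def by simp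
  also have "\<dots> = ?d ^ sum (Poly_Mapping.lookup \<beta>) (Poly_Mapping.keys \<beta>)
      * (\<Prod>v\<in>Poly_Mapping.keys \<beta>. Poly_Mapping.single (Poly_Mapping.single (ent_var n v) (Poly_Mapping.lookup \<beta> v)) 1)"
    unfolding power_mult_distrib prod.distrib power_sum mvar_power ..
  also have "\<dots> = ?d ^ sum (Poly_Mapping.lookup \<beta>) (Poly_Mapping.keys \<beta>) * Poly_Mapping.single (ent_monom n \<beta>) 1"
    unfolding prod_single_one ent_monom_def ..
  finally show ?thesis .
qed

lemma lookup_ent_monom:
  assumes "Poly_Mapping.keys \<beta> \<subseteq> ent_labels l m"
  shows "Poly_Mapping.lookup (ent_monom n \<beta>) (Xc (n + i) j) = Poly_Mapping.lookup \<beta> (Ent i j)"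
proof -
  have "Poly_Mapping.lookup (ent_monom n \<beta>) (Xc (n + i) j)
      = (\<Sum>v\<in>Poly_Mapping.keys \<beta>. if v = Ent i j then Poly_Mapping.lookup \<beta> v else 0)"
    unfolding ent_monom_def lookup_sum lookup_single
  proof (intro sum.cong refl)
    fix v assume "v \<in> Poly_Mapping.keys \<beta>"
    then obtain i' j' where "v = Ent i' j'" using assms by (auto simp: ent_labels_def)
    then show "(Poly_Mapping.lookup \<beta> v when ent_var n v = Xc (n + i) j)
        = (if v = Ent i j then Poly_Mapping.lookup \<beta> v else 0)"
      by (auto simp: ent_var_def when_def)
  qed
  then show ?thesis by (simp add: sum.delta' in_keys_iff)
qed

lemma inj_on_ent_monom: "inj_on (ent_monom n) {\<beta>. Poly_Mapping.keys \<beta> \<subseteq> ent_labels l m}"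
proof (rule inj_onI, rule poly_mapping_eqI)
  fix \<beta> \<beta>' v assume \<beta>: "\<beta> \<in> {\<beta>. Poly_Mapping.keys \<beta> \<subseteq> ent_labels l m}"
    and \<beta>': "\<beta>' \<in> {\<beta>. Poly_Mapping.keys \<beta> \<subseteq> ent_labels l m}" and eq: "ent_monom n \<beta> = ent_monom n \<beta>'"
  show "Poly_Mapping.lookup \<beta> v = Poly_Mapping.lookup \<beta>' v"
  proof (cases "v \<in> ent_labels l m")
    case True
    then obtain i j where "v = Ent i j" by (auto simp: ent_labels_def)
    then show ?thesis using lookup_ent_monom[of \<beta> l m n i j] lookup_ent_monom[of \<beta>' l m n i j] \<beta> \<beta>' eq
      by simp
  next
    case False
    then have "v \<notin> Poly_Mapping.keys \<beta>" "v \<notin> Poly_Mapping.keys \<beta>'" using \<beta> \<beta>' by auto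
    then show ?thesis by (simp add: in_keys_iff)
  qed
qed

lemma keys_ent_monom:
  assumes "Poly_Mapping.keys \<beta> \<subseteq> ent_labels l m"
  shows "Poly_Mapping.keys (ent_monom n \<beta>) \<subseteq> {Xc r c | r c. n \<le> r}"
proof -
  have "Poly_Mapping.keys (Poly_Mapping.single (ent_var n v) (Poly_Mapping.lookup \<beta> v)) \<subseteq> {Xc r c | r c. n \<le> r}"
    if "v \<in> Poly_Mapping.keys \<beta>" for v
    using that assms by (auto simp: ent_labels_def ent_var_def)
  then show ?thesis unfolding ent_monom_def using keys_sum by fastforce
qed

lemma mvars_gen_poly_low:
  "L \<in> low_labels n l \<Longrightarrow> mvars (gen_poly n L :: (wvar, 'k::comm_ring_1) mpoly) \<subseteq> {Xc r c | r c. r < n}"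
  using mvars_lower_minor by (fastforce simp: low_labels_def gen_poly_def)

lemma mvars_gen_poly_lft:
  "L \<in> lft_labels n m \<Longrightarrow> mvars (gen_poly n L :: (wvar, 'k::comm_ring_1) mpoly) \<subseteq> {Yc r c | r c. True}"
  using mvars_left_minor by (fastforce simp: lft_labels_def gen_poly_def)

text \<open>Under \<open>scaled_gen\<close> the monomial \<open>\<beta>\<close> becomes \<open>det X ^ |\<beta>|\<close> times a monomial in the fresh
  indeterminates, distinct for distinct \<open>\<beta>\<close>.\<close>

lemma msubst_gen_poly_coeff_eq_0:
  fixes P :: "(mlab \<Rightarrow>\<^sub>0 nat) \<Rightarrow> (mlab, 'k::field) mpoly"
  assumes lmn: "l + m \<le> n" and I: "finite I" "\<And>\<beta>. \<beta> \<in> I \<Longrightarrow> Poly_Mapping.keys \<beta> \<subseteq> ent_labels l m"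
    and P: "\<And>\<beta>. mvars (P \<beta>) \<subseteq> low_labels n l \<union> lft_labels n m"
    and zero: "msubst (scaled_gen n l) (\<Sum>\<beta>\<in>I. Poly_Mapping.single \<beta> 1 * P \<beta>) = (0 :: (wvar, 'k) mpoly)"
    and \<beta>0: "\<beta>0 \<in> I"
  shows "msubst (gen_poly n) (P \<beta>0) = (0 :: (wvar, 'k) mpoly)"
proof -
  let ?d = "lower_minor n {0..<l} :: (wvar, 'k) mpoly"
  let ?c = "\<lambda>\<beta>. ?d ^ sum (Poly_Mapping.lookup \<beta>) (Poly_Mapping.keys \<beta>) * msubst (gen_poly n) (P \<beta>)"
  let ?A = "{Xc r c | r c. r < n} \<union> {Yc r c | r c. True}"
  have scaled_P: "msubst (scaled_gen n l) (P \<beta>) = msubst (gen_poly n) (P \<beta>)" for \<beta>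
  proof (rule msubst_cong)
    fix v assume "v \<in> mvars (P \<beta>)"
    then have "v \<in> low_labels n l \<union> lft_labels n m" using P by blast
    then show "scaled_gen n l v = gen_poly n v"
      by (auto simp: low_labels_def lft_labels_def scaled_gen_def)
  qed
  have sum_zero: "(\<Sum>\<beta>\<in>I. ?c \<beta> * Poly_Mapping.single (ent_monom n \<beta>) 1) = 0"
    using zero unfolding msubst_sum msubst_mult
    by (simp add: msubst_scaled_gen_monom[OF I(2)] scaled_P mult_ac cong: sum.cong)
  have c_A: "mvars (?c \<beta>) \<subseteq> ?A" for \<beta>
  proof (rule mvars_mult_subset)
    have "mvars ?d \<subseteq> ?A"
      using mvars_lower_minor[of "{0..<l}" n] lmn by auto
    then show "mvars (?d ^ sum (Poly_Mapping.lookup \<beta>) (Poly_Mapping.keys \<beta>)) \<subseteq> ?A"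
      by (rule order.trans[OF mvars_power])
    show "mvars (msubst (gen_poly n) (P \<beta>)) \<subseteq> ?A"
      using mvars_msubst[of "gen_poly n" "P \<beta>"] P[of \<beta>] mvars_gen_poly_low mvars_gen_poly_lft by blast
  qed
  have AB: "?A \<inter> {Xc r c | r c. n \<le> r} = {}" by auto
  have inj: "inj_on (ent_monom n) I"
    using inj_on_subset[OF inj_on_ent_monom[of n l m]] I(2) by blast
  have "?c \<beta>0 = 0"
    by (rule sum_mult_monomials_eq_0D[OF I(1) AB c_A keys_ent_monom[OF I(2)] inj sum_zero \<beta>0])
  then show ?thesis
    using lmn by (simp add: lower_minor_atLeastLessThan_ne_0)
qed

lemma relations_subset_minor_relations_ideal:
  assumes lmn: "l + m \<le> n"
  shows "relations TYPE('k::field) n (M_labels n l m) \<subseteq> minor_relations_ideal TYPE('k) n l m"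
proof
  fix p assume p: "p \<in> relations TYPE('k) n (M_labels n l m)"
  obtain I P where I: "finite I" "\<And>\<beta>. \<beta> \<in> I \<Longrightarrow> Poly_Mapping.keys \<beta> \<subseteq> mvars p \<inter> ent_labels l m"
    and P: "\<And>\<beta>. mvars (P \<beta>) \<subseteq> mvars p - ent_labels l m"
    and p_eq: "p = (\<Sum>\<beta>\<in>I. Poly_Mapping.single \<beta> 1 * P \<beta>)"
    using mpoly_decompose_vars[of p "ent_labels l m"] by blast
  have pM: "mvars p \<subseteq> M_labels n l m" using p by (simp add: relations_def)
  have PL: "mvars (P \<beta>) \<subseteq> low_labels n l \<union> lft_labels n m" for \<beta>
    using P[of \<beta>] pM by (auto simp: M_labels_def)
  have I_ent: "Poly_Mapping.keys \<beta> \<subseteq> ent_labels l m" if "\<beta> \<in> I" for \<beta>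
    using I(2)[OF that] by blast
  have zero: "msubst (scaled_gen n l) (\<Sum>\<beta>\<in>I. Poly_Mapping.single \<beta> 1 * P \<beta>) = (0 :: (wvar, 'k) mpoly)"
    using msubst_scaled_gen_relation[OF lmn p] unfolding p_eq .
  have "P \<beta> \<in> minor_relations_ideal TYPE('k) n l m" if "\<beta> \<in> I" for \<beta>
    unfolding polys_in_def relations_eq_msubst_relations
  proof (rule msubst_relations_disjoint_vars)
    show "low_labels n l \<subseteq> M_labels n l m" "lft_labels n m \<subseteq> M_labels n l m"
      by (auto simp: M_labels_def)
    show "{Xc r c | r c. r < n} \<inter> {Yc r c | r c. True} = {}" by auto
    show "mvars (gen_poly n v :: (wvar, 'k) mpoly) \<subseteq> {Xc r c | r c. r < n}" if "v \<in> low_labels n l" for v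
      using that by (rule mvars_gen_poly_low)
    show "mvars (gen_poly n v :: (wvar, 'k) mpoly) \<subseteq> {Yc r c | r c. True}" if "v \<in> lft_labels n m" for v
      using that by (rule mvars_gen_poly_lft)
    show "P \<beta> \<in> msubst_relations (gen_poly n) (low_labels n l \<union> lft_labels n m)"
      using msubst_gen_poly_coeff_eq_0[OF lmn I(1) I_ent PL zero that] PL
      unfolding msubst_relations_def by blast
  qed
  moreover have "Poly_Mapping.single \<beta> 1 \<in> polys_in TYPE('k) (M_labels n l m)" if "\<beta> \<in> I" for \<beta>
    using mvars_single[of \<beta>] I(2)[OF that] pM by (auto simp: polys_in_def)
  ultimately show "p \<in> minor_relations_ideal TYPE('k) n l m"
    unfolding p_eq polys_in_def by (intro ideal_gen_in_mvars_sum ideal_gen_in_mvars_mult) auto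
qed

theorem theorem4:
  fixes n l m :: nat
  assumes "alg_closed_field TYPE('k::field_char_0)"
    and "0 < l" and "0 < m"
  shows "relations TYPE('k) n (M_labels n l m) =
           ideal_gen_in (polys_in TYPE('k) (M_labels n l m))
             (relations TYPE('k) n (low_labels n l) \<union> relations TYPE('k) n (lft_labels n m))
         \<longleftrightarrow> l + m \<le> n"
proof
  assume "relations TYPE('k) n (M_labels n l m) = minor_relations_ideal TYPE('k) n l m"
  then show "l + m \<le> n"
    using relations_ne_minor_relations_ideal[OF assms(2,3)] by (meson not_le)
next
  assume "l + m \<le> n"
  then show "relations TYPE('k) n (M_labels n l m) = minor_relations_ideal TYPE('k) n l m"
    using relations_subset_minor_relations_ideal minor_relations_ideal_subset_relations by blast
qed

end
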